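(* Let $C_2$ be the 2-chain and $W$ the wedge poset. Then $[C_2\odot W]'=\{S_3|_{1,2}\}$: the only poset $P$ with $P\oslash' W\cong C_2$ and $P\not\cong C_2$ is the poset $S_3|_{1,2}$.
   Context: $C_2=\{x<y\}$. The wedge $W$ is the 3-element poset $\{x,y,z\}$ with $x<z$, $y<z$ (two minimal elements below one maximal element). $S_3|_{1,2}$ is the 10-element poset consisting of the six 2-element subsets and the four 3-element subsets of $\{1,2,3,4\}$, ordered by inclusion (the edges and 2-faces of a tetrahedron). Notation for a poset $P$: $J^-(a)=\{c:c\le a\}$, $J^+(a)=\{c:a\le c\}$; $\ell(X)$ is the cardinality of a longest chain of a poset $X$. A subset $A$ of a poset $X$ is maximally ordered in $X$ if $|\{(a,b)\in A\times A:a<b\}|$ is maximal among subsets of $X$ of cardinality $|A|$. $A\subseteq P$ is linked if for all $a<b$ in $A$, either $b$ covers $a$ or there exists $c\in J^+(a)\cap J^-(b)$ with $c\in A$. For $\sigma\in\mathrm{Aut}(P)$, $\Sigma(\sigma)=\{a:\sigma(a)\ne a\}$. For finite $Q$ and $r\ge2$: $\sigma$ is a $(Q,r)$-generator if there exist subsets $S_0,\dots,S_{r-1}\subset\Sigma(\sigma)$, each isomorphic to $Q$, which are smallest maximally ordered subsets of $\Sigma(\sigma)$ with $\sigma(S_i)=S_{(i+1)\bmod r}$, $\ell(S_i)=\ell(\Sigma(\sigma))$, $\bigcup_iS_i=\Sigma(\sigma)$; distinct $S_i,S_j$ are $(Q,r)$-symmetric subsets. Elements $a,b$ are $(Q,r,0)$-symmetric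 if $a=b$; $(Q,r,1)$-symmetric if there are $(Q,r)$-symmetric subsets $A,B$ with generator $\sigma$, $a\in A$, $b=\sigma^q(a)\in B$, $1\le q<r$; for $n\ge2$, $(Q,r,n)$-symmetric if not $(Q,r,j)$-symmetric for $j<n$ but there exist $c$, $j<n$ with $a$ $(Q,r,j)$-symmetric to $c$ and $c$ $(Q,r,n-j)$-symmetric to $b$; $(Q,r)$-symmetric if $(Q,r,n)$-symmetric for some $n\ge0$ (an equivalence relation). $P\oslash_rQ$ is the quotient poset of equivalence classes with $E\le F$ iff some $e\in E$, $f\in F$ satisfy $e\le f$. For a linked subset $A\cong Q$, the $(Q,r)$-symmetry group of $A$ is the largest subgroup of $\mathrm{Aut}(P)$ of $(Q,r)$-generators whose action fixes every $b\in P$ to which no $a\in A$ is $(Q,r)$-symmetric; the $(Q,r)$-symmetry set of $A$ is the set of elements not fixed by this group. The symmetry of a $(Q,r)$-symmetry set $S$ is composite if there exist a finite poset $\hat Q$, $\hat r\ge2$ and a $(\hat Q,\hat r)$-symmetry set $\hat S\subseteq S$ with either $\hat Q$ a proper subposet of $Q$, or $\hat Q=Q$ and $\hat r<r$; prime otherwise. $P\oslash'_rQ$ is the retraction using only prime $(Q,r)$-symmetries, and $[R\odot_rQ]'=\{P:P\oslash'_rQ\cong R,\ P\not\cong R\}$; for $r=2$ the index is dropped. *)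

theory Defs
  imports Main
begin

definition poset :: "'a set \<Rightarrow> ('a \<Rightarrow> 'a \<Rightarrow> bool) \<Rightarrow> bool" where
  "poset A le \<longleftrightarrow> (\<forall>x\<in>A. le x x)
     \<and> (\<forall>x\<in>A. \<forall>y\<in>A. le x y \<and> le y x \<longrightarrow> x = y)
     \<and> (\<forall>x\<in>A. \<forall>y\<in>A. \<forall>z\<in>A. le x y \<and> le y z \<longrightarrow> le x z)"

definition less_in :: "('a \<Rightarrow> 'a \<Rightarrow> bool) \<Rightarrow> 'a \<Rightarrow> 'a \<Rightarrow> bool" where
  "less_in le a b \<longleftrightarrow> le a b \<and> a \<noteq> b"

definition poset_iso :: "'a set \<Rightarrow> ('a \<Rightarrow> 'a \<Rightarrow> bool) \<Rightarrow> 'b set \<Rightarrow> ('b \<Rightarrow> 'b \<Rightarrow> bool) \<Rightarrow> bool" where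
  "poset_iso A le B le' \<longleftrightarrow>
     (\<exists>f. bij_betw f A B \<and> (\<forall>x\<in>A. \<forall>y\<in>A. le x y \<longleftrightarrow> le' (f (x)) (f y)))"

definition aut :: "'a set \<Rightarrow> ('a \<Rightarrow> 'a \<Rightarrow> bool) \<Rightarrow> ('a \<Rightarrow> 'a) \<Rightarrow> bool" where
  "aut P le \<sigma> \<longleftrightarrow> bij_betw \<sigma> P P \<and> (\<forall>x\<in>P. \<forall>y\<in>P. le x y \<longleftrightarrow> le (\<sigma> x) (\<sigma> y))
     \<and> (\<forall>x. x \<notin> P \<longrightarrow> \<sigma> x = x)"

definition moved :: "'a set \<Rightarrow> ('a \<Rightarrow> 'a) \<Rightarrow> 'a set" where
  "moved P \<sigma> = {a \<in> P. \<sigma> a \<noteq> a}"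

definition is_chain :: "('a \<Rightarrow> 'a \<Rightarrow> bool) \<Rightarrow> 'a set \<Rightarrow> bool" where
  "is_chain le C \<longleftrightarrow> (\<forall>x\<in>C. \<forall>y\<in>C. le x y \<or> le y x)"

definition height :: "('a \<Rightarrow> 'a \<Rightarrow> bool) \<Rightarrow> 'a set \<Rightarrow> nat" where
  "height le X = Max {card C | C. C \<subseteq> X \<and> is_chain le C}"

definition n_ord :: "('a \<Rightarrow> 'a \<Rightarrow> bool) \<Rightarrow> 'a set \<Rightarrow> nat" where
  "n_ord le A = card {(a, b). a \<in> A \<and> b \<in> A \<and> less_in le a b}"

definition max_ordered :: "('a \<Rightarrow> 'a \<Rightarrow> bool) \<Rightarrow> 'a set \<Rightarrow> 'a set \<Rightarrow> bool" where
  "max_ordered le X A \<longleftrightarrow> A \<subseteq> X \<and>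
     (\<forall>B. B \<subseteq> X \<and> card B = card A \<longrightarrow> n_ord le B \<le> n_ord le A)"

definition covers :: "'a set \<Rightarrow> ('a \<Rightarrow> 'a \<Rightarrow> bool) \<Rightarrow> 'a \<Rightarrow> 'a \<Rightarrow> bool" where
  "covers P le a b \<longleftrightarrow> less_in le a b \<and> \<not> (\<exists>c\<in>P. less_in le a c \<and> less_in le c b)"

definition linked :: "'a set \<Rightarrow> ('a \<Rightarrow> 'a \<Rightarrow> bool) \<Rightarrow> 'a set \<Rightarrow> bool" where
  "linked P le A \<longleftrightarrow> (\<forall>a\<in>A. \<forall>b\<in>A. less_in le a b \<longrightarrow>
      covers P le a b \<or> (\<exists>c\<in>A. less_in le a c \<and> less_in le c b))"

text \<open>The structural conditions on a family S_0..S_{r-1} for \<sigma> (without the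
  isomorphism type and without minimality).\<close>
definition gen_family :: "'a set \<Rightarrow> ('a \<Rightarrow> 'a \<Rightarrow> bool) \<Rightarrow> nat \<Rightarrow> ('a \<Rightarrow> 'a) \<Rightarrow> (nat \<Rightarrow> 'a set) \<Rightarrow> bool" where
  "gen_family P le r \<sigma> S \<longleftrightarrow>
     (\<forall>i<r. S i \<subseteq> moved P \<sigma>
        \<and> max_ordered le (moved P \<sigma>) (S i)
        \<and> \<sigma> ` (S i) = S ((i + 1) mod r)
        \<and> height le (S i) = height le (moved P \<sigma>))
     \<and> (\<Union>i<r. S i) = moved P \<sigma>"

definition generator_fam :: "'a set \<Rightarrow> ('a \<Rightarrow> 'a \<Rightarrow> bool) \<Rightarrow> 'q set \<Rightarrow> ('q \<Rightarrow> 'q \<Rightarrow> bool)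
     \<Rightarrow> nat \<Rightarrow> ('a \<Rightarrow> 'a) \<Rightarrow> (nat \<Rightarrow> 'a set) \<Rightarrow> bool" where
  "generator_fam P le Q qle r \<sigma> S \<longleftrightarrow>
     aut P le \<sigma> \<and> 2 \<le> r \<and> gen_family P le r \<sigma> S
     \<and> (\<forall>i<r. poset_iso (S i) le Q qle)
     \<and> (\<forall>T. gen_family P le r \<sigma> T \<longrightarrow> (\<forall>i<r. card (S i) \<le> card (T i)))"

definition is_generator :: "'a set \<Rightarrow> ('a \<Rightarrow> 'a \<Rightarrow> bool) \<Rightarrow> 'q set \<Rightarrow> ('q \<Rightarrow> 'q \<Rightarrow> bool)
     \<Rightarrow> nat \<Rightarrow> ('a \<Rightarrow> 'a) \<Rightarrow> bool" where
  "is_generator P le Q qle r \<sigma> \<longleftrightarrow> (\<exists>S. generator_fam P le Q qle r \<sigma> S)"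

definition sym_step :: "'a set \<Rightarrow> ('a \<Rightarrow> 'a \<Rightarrow> bool) \<Rightarrow> 'q set \<Rightarrow> ('q \<Rightarrow> 'q \<Rightarrow> bool)
     \<Rightarrow> nat \<Rightarrow> ('a \<Rightarrow> 'a) \<Rightarrow> 'a \<Rightarrow> 'a \<Rightarrow> bool" where
  "sym_step P le Q qle r \<sigma> a b \<longleftrightarrow>
     (\<exists>S i j q. generator_fam P le Q qle r \<sigma> S \<and> i < r \<and> j < r \<and> S i \<noteq> S j
        \<and> a \<in> S i \<and> b \<in> S j \<and> 1 \<le> q \<and> q < r \<and> b = (\<sigma> ^^ q) a)"

definition sym1 :: "'a set \<Rightarrow> ('a \<Rightarrow> 'a \<Rightarrow> bool) \<Rightarrow> 'q set \<Rightarrow> ('q \<Rightarrow> 'q \<Rightarrow> bool)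
     \<Rightarrow> nat \<Rightarrow> 'a \<Rightarrow> 'a \<Rightarrow> bool" where
  "sym1 P le Q qle r a b \<longleftrightarrow> (\<exists>\<sigma>. sym_step P le Q qle r \<sigma> a b)"

definition symrel :: "'a set \<Rightarrow> ('a \<Rightarrow> 'a \<Rightarrow> bool) \<Rightarrow> 'q set \<Rightarrow> ('q \<Rightarrow> 'q \<Rightarrow> bool)
     \<Rightarrow> nat \<Rightarrow> 'a \<Rightarrow> 'a \<Rightarrow> bool" where
  "symrel P le Q qle r = (sup (sym1 P le Q qle r) (conversep (sym1 P le Q qle r)))\<^sup>*\<^sup>*"

inductive_set gen_closure :: "('a \<Rightarrow> 'a) set \<Rightarrow> ('a \<Rightarrow> 'a) set" for G where
  gc_id: "id \<in> gen_closure G"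
| gc_comp: "\<sigma> \<in> G \<Longrightarrow> \<tau> \<in> gen_closure G \<Longrightarrow> \<sigma> \<circ> \<tau> \<in> gen_closure G"

definition adm_gens :: "'a set \<Rightarrow> ('a \<Rightarrow> 'a \<Rightarrow> bool) \<Rightarrow> 'q set \<Rightarrow> ('q \<Rightarrow> 'q \<Rightarrow> bool)
     \<Rightarrow> nat \<Rightarrow> 'a set \<Rightarrow> ('a \<Rightarrow> 'a) set" where
  "adm_gens P le Q qle r A = {\<sigma>. is_generator P le Q qle r \<sigma> \<and>
      (\<forall>b\<in>P. \<not> (\<exists>a\<in>A. symrel P le Q qle r a b) \<longrightarrow> \<sigma> b = b)}"

text \<open>The (Q,r)-symmetry group of A (subgroup of Aut(P) generated by the admissible
  generators; finite permutation group, so closure under composition suffices).\<close>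
definition sym_group :: "'a set \<Rightarrow> ('a \<Rightarrow> 'a \<Rightarrow> bool) \<Rightarrow> 'q set \<Rightarrow> ('q \<Rightarrow> 'q \<Rightarrow> bool)
     \<Rightarrow> nat \<Rightarrow> 'a set \<Rightarrow> ('a \<Rightarrow> 'a) set" where
  "sym_group P le Q qle r A = gen_closure (adm_gens P le Q qle r A)"

definition sym_set :: "'a set \<Rightarrow> ('a \<Rightarrow> 'a \<Rightarrow> bool) \<Rightarrow> 'q set \<Rightarrow> ('q \<Rightarrow> 'q \<Rightarrow> bool)
     \<Rightarrow> nat \<Rightarrow> 'a set \<Rightarrow> 'a set" where
  "sym_set P le Q qle r A = {x \<in> P. \<exists>g\<in>sym_group P le Q qle r A. g x \<noteq> x}"

definition is_sym_set :: "'a set \<Rightarrow> ('a \<Rightarrow> 'a \<Rightarrow> bool) \<Rightarrow> 'q set \<Rightarrow> ('q \<Rightarrow> 'q \<Rightarrow> bool)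
     \<Rightarrow> nat \<Rightarrow> 'a set \<Rightarrow> bool" where
  "is_sym_set P le Q qle r S \<longleftrightarrow>
     (\<exists>A. A \<subseteq> P \<and> linked P le A \<and> poset_iso A le Q qle \<and> S = sym_set P le Q qle r A)"

definition composite :: "'a set \<Rightarrow> ('a \<Rightarrow> 'a \<Rightarrow> bool) \<Rightarrow> 'q set \<Rightarrow> ('q \<Rightarrow> 'q \<Rightarrow> bool)
     \<Rightarrow> nat \<Rightarrow> 'a set \<Rightarrow> bool" where
  "composite P le Q qle r S \<longleftrightarrow>
     (\<exists>Q' r' S'. Q' \<subseteq> Q \<and> 2 \<le> r' \<and> S' \<noteq> {} \<and> S' \<subseteq> S
        \<and> is_sym_set P le Q' qle r' S'
        \<and> (Q' \<subset> Q \<or> (Q' = Q \<and> r' < r)))"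

definition psym1 :: "'a set \<Rightarrow> ('a \<Rightarrow> 'a \<Rightarrow> bool) \<Rightarrow> 'q set \<Rightarrow> ('q \<Rightarrow> 'q \<Rightarrow> bool)
     \<Rightarrow> nat \<Rightarrow> 'a \<Rightarrow> 'a \<Rightarrow> bool" where
  "psym1 P le Q qle r a b \<longleftrightarrow>
     (\<exists>A \<sigma>. A \<subseteq> P \<and> linked P le A \<and> poset_iso A le Q qle
        \<and> \<not> composite P le Q qle r (sym_set P le Q qle r A)
        \<and> \<sigma> \<in> adm_gens P le Q qle r A
        \<and> sym_step P le Q qle r \<sigma> a b)"

definition psymrel :: "'a set \<Rightarrow> ('a \<Rightarrow> 'a \<Rightarrow> bool) \<Rightarrow> 'q set \<Rightarrow> ('q \<Rightarrow> 'q \<Rightarrow> bool)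
     \<Rightarrow> nat \<Rightarrow> 'a \<Rightarrow> 'a \<Rightarrow> bool" where
  "psymrel P le Q qle r = (sup (psym1 P le Q qle r) (conversep (psym1 P le Q qle r)))\<^sup>*\<^sup>*"

definition pretract_carrier :: "'a set \<Rightarrow> ('a \<Rightarrow> 'a \<Rightarrow> bool) \<Rightarrow> 'q set \<Rightarrow> ('q \<Rightarrow> 'q \<Rightarrow> bool)
     \<Rightarrow> nat \<Rightarrow> 'a set set" where
  "pretract_carrier P le Q qle r = {{b \<in> P. psymrel P le Q qle r a b} | a. a \<in> P}"

definition quot_le :: "('a \<Rightarrow> 'a \<Rightarrow> bool) \<Rightarrow> 'a set \<Rightarrow> 'a set \<Rightarrow> bool" where
  "quot_le le E F \<longleftrightarrow> (\<exists>e\<in>E. \<exists>f\<in>F. le e f)"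

definition C2 :: "nat set" where "C2 = {0, 1}"
definition C2_le :: "nat \<Rightarrow> nat \<Rightarrow> bool" where "C2_le x y \<longleftrightarrow> x \<le> y"

definition W :: "nat set" where "W = {0, 1, 2}"
definition W_le :: "nat \<Rightarrow> nat \<Rightarrow> bool" where "W_le x y \<longleftrightarrow> x = y \<or> y = 2"

definition S3_12 :: "nat set set" where
  "S3_12 = {S. S \<subseteq> {1, 2, 3, 4} \<and> (card S = 2 \<or> card S = 3)}"
definition S3_12_le :: "nat set \<Rightarrow> nat set \<Rightarrow> bool" where
  "S3_12_le S T \<longleftrightarrow> S \<subseteq> T"

end

theory Submission
  imports Defs "HOL-Combinatorics.Transposition" "HOL.Binomial_Plus"
begin

text \<open>
  If \<open>P \<oslash>' W \<cong> C\<^sub>2\<close>, the two prime symmetry classes consist of minimal and of maximal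
  elements respectively (both are automorphism invariants), so \<open>P\<close> has height two, with a
  bottom level \<open>E\<close> and a top level \<open>F\<close>. As \<open>P \<noteq> C\<^sub>2\<close>, a prime \<open>(W,2)\<close>-symmetry exists,
  and its symmetry set is all of \<open>P\<close>. Two elements of \<open>E\<close> with the same upper neighbourhood
  would be swapped by a transposition, a \<open>({0},2)\<close>-symmetry making it composite, so elements
  of \<open>E\<close> are determined by their neighbourhoods in \<open>F\<close>. Every \<open>(W,2)\<close>-generator acts on \<open>F\<close>
  as a transposition permuting these neighbourhoods, and \<open>F\<close> is connected by such steps, so
  the neighbourhoods are exactly the \<open>d\<close>-subsets of \<open>F\<close>. For the generator of a wedge
  \<open>a, b < c\<close> moving \<open>c\<close> to \<open>c'\<close>, the elements whose neighbourhood contains \<open>c\<close> but not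
  \<open>c'\<close> are just \<open>a\<close> and \<open>b\<close>, whence \<open>(|F| - 2 choose d - 1) = 2\<close>, i.e. \<open>|F| = 4\<close> and
  \<open>d = 2\<close>: \<open>P\<close> is the edge-face poset of a tetrahedron, which is \<open>S\<^sub>3|\<^sub>1\<^sub>,\<^sub>2\<close>.

  Conversely, in \<open>S\<^sub>3|\<^sub>1\<^sub>,\<^sub>2\<close> every transposition of two faces induces a prime
  \<open>(W,2)\<close>-generator: a generator with a smaller pattern would put all moved edges into a single
  cyclic orbit, which no nontrivial permutation of four faces does. These generators connect
  all edges and all faces, so the retraction is \<open>C\<^sub>2\<close>.
\<close>

section \<open>Finite combinatorics\<close>

lemma transpose_image_eq_iff:
  assumes "u \<noteq> v"
  shows "transpose u v ` X = X \<longleftrightarrow> (u \<in> X \<longleftrightarrow> v \<in> X)"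
  using assms by (metis image_eqI transpose_apply_first transpose_apply_second transpose_image_eq)

lemma transpose_in: "u \<in> A \<Longrightarrow> v \<in> A \<Longrightarrow> x \<in> A \<Longrightarrow> transpose u v x \<in> A"
  by (auto simp: transpose_def)

lemma binomial_eq_2: assumes "(m::nat) choose k = 2" shows "m = 2 \<and> k = 1"
proof -
  have "k \<noteq> 0" "k \<noteq> m" "\<not> m < k"
    using assms by (auto intro!: gr0I dest: binomial_eq_0)
  then show ?thesis using upper_le_binomial[of k m] assms by simp
qed

lemma card_subsets_containing_avoiding:
  assumes "finite F" "c \<in> F" "c' \<in> F" "c \<noteq> c'" "1 \<le> d"
  shows "card {X. X \<subseteq> F \<and> card X = d \<and> c \<in> X \<and> c' \<notin> X} = (card F - 2) choose (d - 1)"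
proof -
  have "bij_betw (insert c) {Y. Y \<subseteq> F - {c, c'} \<and> card Y = d - 1}
      {X. X \<subseteq> F \<and> card X = d \<and> c \<in> X \<and> c' \<notin> X}"
  proof (rule bij_betw_byWitness[where f' = "\<lambda>X. X - {c}"])
    show "insert c ` {Y. Y \<subseteq> F - {c, c'} \<and> card Y = d - 1}
        \<subseteq> {X. X \<subseteq> F \<and> card X = d \<and> c \<in> X \<and> c' \<notin> X}"
      using assms by (auto simp: card_insert_if finite_subset)
    show "(\<lambda>X. X - {c}) ` {X. X \<subseteq> F \<and> card X = d \<and> c \<in> X \<and> c' \<notin> X}
        \<subseteq> {Y. Y \<subseteq> F - {c, c'} \<and> card Y = d - 1}"
      using assms by (auto simp: finite_subset)
  qed auto
  then show ?thesis
    using n_subsets[of "F - {c, c'}" "d - 1"] assms by (simp add: bij_betw_same_card card_Diff_subset numeral_2_eq_2)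
qed

lemma bij_betw_image_subsets_card:
  assumes "bij_betw g A B"
  shows "bij_betw (image g) {Y. Y \<subseteq> A \<and> K (card Y)} {Y. Y \<subseteq> B \<and> K (card Y)}"
proof (rule bij_betw_subset[OF bij_betw_image_Pow[OF assms]])
  have card: "card (g ` Y) = card Y" if "Y \<subseteq> A" for Y
    using assms that by (meson bij_betw_imp_inj_on card_image inj_on_subset)
  show "image g ` {Y. Y \<subseteq> A \<and> K (card Y)} = {Y. Y \<subseteq> B \<and> K (card Y)}"
  proof
    show "image g ` {Y. Y \<subseteq> A \<and> K (card Y)} \<subseteq> {Y. Y \<subseteq> B \<and> K (card Y)}"
      using card bij_betw_imp_surj_on[OF assms] by auto
    show "{Y. Y \<subseteq> B \<and> K (card Y)} \<subseteq> image g ` {Y. Y \<subseteq> A \<and> K (card Y)}"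
    proof
      fix Z assume Z: "Z \<in> {Y. Y \<subseteq> B \<and> K (card Y)}"
      then obtain Y where "Y \<subseteq> A" "Z = g ` Y"
        using bij_betw_imp_surj_on[OF bij_betw_image_Pow[OF assms]]
        by (metis (no_types, lifting) PowD PowI imageE mem_Collect_eq)
      then show "Z \<in> image g ` {Y. Y \<subseteq> A \<and> K (card Y)}" using Z card by auto
    qed
  qed
qed auto

lemma bij_betw_restrict_pred:
  assumes "bij_betw f A B"
  shows "bij_betw f {x \<in> A. p (f x)} {y \<in> B. p y}"
  by (rule bij_betw_subset[OF assms]) (use bij_betw_imp_surj_on[OF assms] in auto)

lemma bij_betw_the_elem: "bij_betw the_elem {Y. Y \<subseteq> X \<and> card Y = 1} X"
proof (rule bij_betw_byWitness[where f' = "\<lambda>x. {x}"])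
  show "the_elem ` {Y. Y \<subseteq> X \<and> card Y = 1} \<subseteq> X"
    by (auto simp: card_1_singleton_iff)
qed (auto simp: card_1_singleton_iff)

lemma transpose_closed_trans:
  assumes "\<forall>X\<in>\<N>. transpose u v ` X \<in> \<N>" "\<forall>X\<in>\<N>. transpose v w ` X \<in> \<N>"
  shows "\<forall>X\<in>\<N>. transpose u w ` X \<in> \<N>"
proof (cases "u = v \<or> v = w \<or> u = w")
  case True
  then show ?thesis using assms by (auto simp: transpose_commute)
next
  case False
  then have "transpose u w ` X = transpose u v ` transpose v w ` transpose u v ` X" for X :: "'a set"
    by (simp add: image_comp comp_def transpose_triple)
  then show ?thesis using assms by simp
qed

lemma transpose_closed_family_contains_equicardinal:
  assumes closed: "\<And>u v X. u \<in> F \<Longrightarrow> v \<in> F \<Longrightarrow> X \<in> \<N> \<Longrightarrow> transpose u v ` X \<in> \<N>"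
    and "finite F" "X \<in> \<N>" "X \<subseteq> F" "Y \<subseteq> F" "card Y = card X"
  shows "Y \<in> \<N>"
  using assms(3-6)
proof (induction "card (X - Y)" arbitrary: X)
  case 0
  have "finite X" "finite Y" using 0 \<open>finite F\<close> finite_subset by blast+
  then have "X \<subseteq> Y" using 0 by simp
  then show ?case using 0 card_subset_eq[OF \<open>finite Y\<close>] by metis
next
  case (Suc n)
  have "finite X" "finite Y" using Suc.prems \<open>finite F\<close> finite_subset by blast+
  then have "card (Y - X) = card (X - Y)"
    using card_Int_Diff[of X Y] card_Int_Diff[of Y X] Suc.prems(4) by (simp add: Int_commute)
  then obtain u v where u: "u \<in> X" "u \<notin> Y" and v: "v \<in> Y" "v \<notin> X"
    using Suc.hyps(2) by (metis Diff_iff card.empty ex_in_conv nat.distinct(1))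
  define X' where "X' = transpose u v ` X"
  have X': "X' = insert v (X - {u})"
    using u v unfolding X'_def by (auto simp: in_transpose_image_iff transpose_def)
  have "0 < card X" using u(1) \<open>finite X\<close> card_gt_0_iff by blast
  have "X' \<in> \<N>" using closed Suc.prems u v unfolding X'_def by blast
  moreover have "X' \<subseteq> F" "card Y = card X'"
    using Suc.prems u v X' \<open>finite X\<close> \<open>0 < card X\<close> by (auto simp: card_insert_if)
  moreover have "X' - Y = (X - Y) - {u}" using X' v by auto
  then have "n = card (X' - Y)" using Suc.hyps(2) u \<open>finite X\<close> by simp
  ultimately show ?case using Suc.hyps(1) Suc.prems(3) by blast
qed

lemma card_4_remaining:
  assumes "card F = 4" "a \<in> F" "b \<in> F" "c \<in> F" "a \<noteq> b" "a \<noteq> c" "b \<noteq> c"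
  obtains w where "F = {a, b, c, w}" "w \<noteq> a" "w \<noteq> b" "w \<noteq> c"
proof -
  have "card (F - {a, b, c}) = 1"
    using assms by (simp add: card_Diff_subset card.infinite)
  then obtain w where "F - {a, b, c} = {w}" by (rule card_1_singletonE)
  then show thesis using that assms(2-4) by blast
qed

lemma inj_on_image_swap_iff:
  assumes "inj_on \<pi> F" "A \<subseteq> F" "B \<subseteq> F" "\<pi> ` A = B" "\<pi> ` B = A" "Y \<subseteq> F"
  shows "(\<pi> ` Y = A \<or> \<pi> ` Y = B) \<longleftrightarrow> (Y = A \<or> Y = B)"
  using inj_on_image_eq_iff[OF assms(1) assms(6) assms(2)] inj_on_image_eq_iff[OF assms(1) assms(6) assms(3)]
    assms(4,5) by auto

lemma perm_4_fixed_point_pairs: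
  assumes F: "card F = 4" and \<pi>: "inj_on \<pi> F" "\<pi> ` F = F" and f: "f \<in> F" "\<pi> f \<noteq> f"
    and z: "z \<in> F" "\<pi> z = z"
  obtains Y\<^sub>1 Y\<^sub>2 where "Y\<^sub>1 \<subseteq> F" "card Y\<^sub>1 = 2" "\<pi> ` Y\<^sub>1 \<noteq> Y\<^sub>1" "z \<in> Y\<^sub>1"
    "Y\<^sub>2 \<subseteq> F" "card Y\<^sub>2 = 2" "\<pi> ` Y\<^sub>2 \<noteq> Y\<^sub>2" "z \<notin> Y\<^sub>2"
proof -
  have in_F: "\<pi> x \<in> F" if "x \<in> F" for x using \<pi>(2) that by blast
  have eq_iff: "\<pi> x = \<pi> y \<longleftrightarrow> x = y" if "x \<in> F" "y \<in> F" for x y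
    using \<pi>(1) that by (simp add: inj_on_eq_iff)
  define g where "g = \<pi> f"
  have g: "g \<in> F" "g \<noteq> f" "\<pi> g \<noteq> g" using f in_F eq_iff unfolding g_def by metis+
  have zfg: "z \<noteq> f" "z \<noteq> g" using z f g unfolding g_def by auto
  have "{f, z} \<subseteq> F" "card {f, z} = 2" "\<pi> ` {f, z} \<noteq> {f, z}"
    using f z zfg g unfolding g_def by (auto simp: doubleton_eq_iff)
  moreover obtain Y\<^sub>2 where "Y\<^sub>2 \<subseteq> F" "card Y\<^sub>2 = 2" "\<pi> ` Y\<^sub>2 \<noteq> Y\<^sub>2" "z \<notin> Y\<^sub>2"
  proof (cases "\<pi> g = f")
    case True
    obtain w where w: "F = {f, g, z, w}" "w \<noteq> f" "w \<noteq> g" "w \<noteq> z"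
      using card_4_remaining[OF F f(1) g(1) z(1)] g(2) zfg by metis
    have "\<pi> w \<in> F" "\<pi> w \<noteq> g" "\<pi> w \<noteq> f" "\<pi> w \<noteq> z"
      using in_F eq_iff w f g z True unfolding g_def by (metis insertCI)+
    then have "\<pi> w = w" using w(1) by blast
    then show thesis using that[of "{f, w}"] w f g zfg unfolding g_def by (auto simp: doubleton_eq_iff)
  next
    case False
    then show thesis using that[of "{f, g}"] f g zfg unfolding g_def by (auto simp: doubleton_eq_iff)
  qed
  ultimately show thesis using that by blast
qed

lemma perm_4_fixed_point_free_pairs:
  assumes F: "card F = 4" and \<pi>: "inj_on \<pi> F" "\<pi> ` F = F" and f: "f \<in> F"
    and no_fix: "\<And>x. x \<in> F \<Longrightarrow> \<pi> x \<noteq> x"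
  obtains A\<^sub>1 A\<^sub>2 Y where "A\<^sub>1 \<subseteq> F" "A\<^sub>2 \<subseteq> F" "\<pi> ` A\<^sub>1 = A\<^sub>2" "\<pi> ` A\<^sub>2 = A\<^sub>1"
    "card A\<^sub>1 = 2" "\<pi> ` A\<^sub>1 \<noteq> A\<^sub>1" "Y \<subseteq> F" "card Y = 2" "\<pi> ` Y \<noteq> Y" "Y \<noteq> A\<^sub>1" "Y \<noteq> A\<^sub>2"
proof -
  have in_F: "\<pi> x \<in> F" if "x \<in> F" for x using \<pi>(2) that by blast
  have eq_iff: "\<pi> x = \<pi> y \<longleftrightarrow> x = y" if "x \<in> F" "y \<in> F" for x y
    using \<pi>(1) that by (simp add: inj_on_eq_iff)
  define g h where "g = \<pi> f" and "h = \<pi> g"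
  have g: "g \<in> F" "g \<noteq> f" and h: "h \<in> F" "h \<noteq> g"
    using f in_F no_fix unfolding g_def h_def by auto
  show thesis
  proof (cases "h = f")
    case True
    have "card (F - {f, g}) = 2" using F f g by (simp add: card_Diff_subset card.infinite)
    then obtain w where w: "w \<in> F" "w \<noteq> f" "w \<noteq> g"
      by (metis Diff_iff card.empty empty_iff insertCI zero_neq_numeral ex_in_conv)
    then obtain z where z: "F = {f, g, w, z}" "z \<noteq> f" "z \<noteq> g" "z \<noteq> w"
      using card_4_remaining[OF F f(1) g(1)] g(2) by metis
    have "\<pi> w \<in> F" "\<pi> w \<noteq> g" "\<pi> w \<noteq> f" "\<pi> w \<noteq> w"
      using in_F eq_iff w f g True no_fix unfolding g_def h_def by (metis insertCI)+
    then have "\<pi> w = z" using z(1) by blast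
    have "\<pi> z \<in> F" "\<pi> z \<noteq> g" "\<pi> z \<noteq> f" "\<pi> z \<noteq> z"
      using in_F eq_iff z f g True no_fix unfolding g_def h_def by (metis insertCI)+
    then have "\<pi> z = w" using z(1) by blast
    show thesis
      by (rule that[of "{f, w}" "{g, z}" "{f, z}"])
        (use f g z w True \<open>\<pi> w = z\<close> \<open>\<pi> z = w\<close> in \<open>auto simp: g_def h_def doubleton_eq_iff\<close>)
  next
    case False
    obtain z where z: "F = {f, g, h, z}" "z \<noteq> f" "z \<noteq> g" "z \<noteq> h"
      using card_4_remaining[OF F f(1) g(1) h(1)] g(2) h(2) False by metis
    have "\<pi> z \<in> F" "\<pi> z \<noteq> g" "\<pi> z \<noteq> h" "\<pi> z \<noteq> z"
      using in_F eq_iff z f g h no_fix unfolding g_def h_def by (metis insertCI)+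
    then have "\<pi> z = f" using z(1) by blast
    have "\<pi> h \<in> F" "\<pi> h \<noteq> g" "\<pi> h \<noteq> h" "\<pi> h \<noteq> f"
      using in_F eq_iff z f g h no_fix \<open>\<pi> z = f\<close> unfolding g_def h_def by (metis insertCI)+
    then have "\<pi> h = z" using z(1) by blast
    show thesis
      by (rule that[of "{f, h}" "{g, z}" "{f, g}"])
        (use f g h z False \<open>\<pi> z = f\<close> \<open>\<pi> h = z\<close> in \<open>auto simp: g_def h_def doubleton_eq_iff\<close>)
  qed
qed

text \<open>The invariant \<open>R\<close> is membership of a fixed point, or else being one of two pairs swapped
  by \<open>\<pi>\<close>.\<close>

lemma perm_4_separating_invariant:
  assumes F: "card F = 4" and \<pi>: "inj_on \<pi> F" "\<pi> ` F = F" and f: "f \<in> F" "\<pi> f \<noteq> f"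
  obtains R Y\<^sub>1 Y\<^sub>2 where "\<And>Y. Y \<subseteq> F \<Longrightarrow> R (\<pi> ` Y) \<longleftrightarrow> R Y"
    "Y\<^sub>1 \<subseteq> F" "card Y\<^sub>1 = 2" "\<pi> ` Y\<^sub>1 \<noteq> Y\<^sub>1" "R Y\<^sub>1"
    "Y\<^sub>2 \<subseteq> F" "card Y\<^sub>2 = 2" "\<pi> ` Y\<^sub>2 \<noteq> Y\<^sub>2" "\<not> R Y\<^sub>2"
proof (cases "\<exists>z\<in>F. \<pi> z = z")
  case True
  then obtain z where z: "z \<in> F" "\<pi> z = z" by blast
  have "z \<in> \<pi> ` Y \<longleftrightarrow> z \<in> Y" if "Y \<subseteq> F" for Y
    using z \<pi>(1) that by (metis image_iff inj_on_eq_iff subsetD)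
  then show thesis
    using perm_4_fixed_point_pairs[OF F \<pi> f z] that[of "\<lambda>Y. z \<in> Y"] by metis
next
  case False
  show thesis
  proof (rule perm_4_fixed_point_free_pairs[OF F \<pi> f(1)])
    show "\<pi> x \<noteq> x" if "x \<in> F" for x using False that by blast
  next
    fix A\<^sub>1 A\<^sub>2 Y
    assume "A\<^sub>1 \<subseteq> F" "A\<^sub>2 \<subseteq> F" "\<pi> ` A\<^sub>1 = A\<^sub>2" "\<pi> ` A\<^sub>2 = A\<^sub>1" "card A\<^sub>1 = 2" "\<pi> ` A\<^sub>1 \<noteq> A\<^sub>1"
      "Y \<subseteq> F" "card Y = 2" "\<pi> ` Y \<noteq> Y" "Y \<noteq> A\<^sub>1" "Y \<noteq> A\<^sub>2"
    then show thesis
      using that[of "\<lambda>Y. Y = A\<^sub>1 \<or> Y = A\<^sub>2" A\<^sub>1 Y] inj_on_image_swap_iff[OF \<pi>(1)] by auto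
  qed
qed

lemma perm_4_moved_pair_outside_orbit:
  assumes F: "card F = 4" and \<pi>: "inj_on \<pi> F" "\<pi> ` F = F" and f: "f \<in> F" "\<pi> f \<noteq> f"
    and X: "X \<subseteq> F"
  obtains Y where "Y \<subseteq> F" "card Y = 2" "\<pi> ` Y \<noteq> Y" "\<And>i. (\<pi> ^^ i) ` X \<noteq> Y"
proof -
  obtain R Y\<^sub>1 Y\<^sub>2 where R: "\<And>Y. Y \<subseteq> F \<Longrightarrow> R (\<pi> ` Y) \<longleftrightarrow> R Y"
    and Y\<^sub>1: "Y\<^sub>1 \<subseteq> F" "card Y\<^sub>1 = 2" "\<pi> ` Y\<^sub>1 \<noteq> Y\<^sub>1" "R Y\<^sub>1"
    and Y\<^sub>2: "Y\<^sub>2 \<subseteq> F" "card Y\<^sub>2 = 2" "\<pi> ` Y\<^sub>2 \<noteq> Y\<^sub>2" "\<not> R Y\<^sub>2"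
    by (rule perm_4_separating_invariant[OF F \<pi> f]) (rule that)
  have "(\<pi> ^^ i) ` X \<subseteq> F \<and> (R ((\<pi> ^^ i) ` X) \<longleftrightarrow> R X)" for i
  proof (induction i)
    case (Suc i)
    then show ?case using R[of "(\<pi> ^^ i) ` X"] \<pi>(2) by (auto simp: image_comp)
  qed (use X in simp)
  then show thesis
    using that Y\<^sub>1 Y\<^sub>2 by (cases "R X") metis+
qed

section \<open>Automorphisms and prime symmetries\<close>

lemma aut_bij_betw: "aut P le \<sigma> \<Longrightarrow> bij_betw \<sigma> P P"
  by (simp add: aut_def)

lemma aut_le_iff: "aut P le \<sigma> \<Longrightarrow> x \<in> P \<Longrightarrow> y \<in> P \<Longrightarrow> le (\<sigma> x) (\<sigma> y) \<longleftrightarrow> le x y"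
  by (simp add: aut_def)

lemma aut_outside: "aut P le \<sigma> \<Longrightarrow> x \<notin> P \<Longrightarrow> \<sigma> x = x"
  by (simp add: aut_def)

lemma aut_in: "aut P le \<sigma> \<Longrightarrow> x \<in> P \<Longrightarrow> \<sigma> x \<in> P"
  using aut_bij_betw bij_betwE by blast

lemma aut_image: "aut P le \<sigma> \<Longrightarrow> \<sigma> ` P = P"
  using aut_bij_betw bij_betw_imp_surj_on by metis

lemma aut_eq_iff: "aut P le \<sigma> \<Longrightarrow> x \<in> P \<Longrightarrow> y \<in> P \<Longrightarrow> \<sigma> x = \<sigma> y \<longleftrightarrow> x = y"
  using aut_bij_betw bij_betw_imp_inj_on inj_on_eq_iff by metis

lemma aut_converse: "aut P le \<sigma> \<Longrightarrow> aut P (\<lambda>x y. le y x) \<sigma>"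
  by (simp add: aut_def)

lemma aut_id: "aut P le id"
  by (simp add: aut_def)

lemma aut_comp: assumes "aut P le \<sigma>" "aut P le \<tau>" shows "aut P le (\<sigma> \<circ> \<tau>)"
  unfolding aut_def
proof (intro conjI ballI allI impI)
  show "bij_betw (\<sigma> \<circ> \<tau>) P P"
    using bij_betw_trans[OF aut_bij_betw[OF assms(2)] aut_bij_betw[OF assms(1)]] .
  fix x y assume "x \<in> P" "y \<in> P"
  then show "le x y \<longleftrightarrow> le ((\<sigma> \<circ> \<tau>) x) ((\<sigma> \<circ> \<tau>) y)"
    using aut_in[OF assms(2)] aut_le_iff[OF assms(1)] aut_le_iff[OF assms(2)] by simp
next
  fix x assume "x \<notin> P"
  then show "(\<sigma> \<circ> \<tau>) x = x" by (metis assms aut_outside comp_apply)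
qed

lemma aut_funpow: "aut P le \<sigma> \<Longrightarrow> aut P le (\<sigma> ^^ n)"
  by (induction n) (simp_all add: aut_id aut_comp)

lemma poset_converse: "poset P le \<Longrightarrow> poset P (\<lambda>x y. le y x)"
  unfolding poset_def by blast

lemma poset_refl: "poset P le \<Longrightarrow> x \<in> P \<Longrightarrow> le x x"
  unfolding poset_def by blast

lemma poset_antisym: "poset P le \<Longrightarrow> x \<in> P \<Longrightarrow> y \<in> P \<Longrightarrow> le x y \<Longrightarrow> le y x \<Longrightarrow> x = y"
  unfolding poset_def by blast

lemma poset_trans:
  "poset P le \<Longrightarrow> x \<in> P \<Longrightarrow> y \<in> P \<Longrightarrow> z \<in> P \<Longrightarrow> le x y \<Longrightarrow> le y z \<Longrightarrow> le x z"
  unfolding poset_def by blast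

text \<open>Maximality is expressed as \<open>minimal_in\<close> for the converse order.\<close>

definition minimal_in :: "'a set \<Rightarrow> ('a \<Rightarrow> 'a \<Rightarrow> bool) \<Rightarrow> 'a \<Rightarrow> bool" where
  "minimal_in P le x \<longleftrightarrow> (\<forall>y\<in>P. le y x \<longrightarrow> y = x)"

lemma minimal_in_aut_iff:
  assumes "aut P le \<sigma>" "x \<in> P"
  shows "minimal_in P le (\<sigma> x) \<longleftrightarrow> minimal_in P le x"
proof -
  have "minimal_in P le (\<sigma> x) \<longleftrightarrow> (\<forall>y\<in>\<sigma> ` P. le y (\<sigma> x) \<longrightarrow> y = \<sigma> x)"
    unfolding minimal_in_def using aut_image[OF assms(1)] by simp
  also have "\<dots> \<longleftrightarrow> (\<forall>y\<in>P. le y x \<longrightarrow> y = x)"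
    using aut_le_iff[OF assms(1) _ assms(2)] aut_eq_iff[OF assms(1) _ assms(2)] by auto
  finally show ?thesis unfolding minimal_in_def .
qed

lemma finite_poset_minimal_below:
  assumes "finite P" "poset P le" "x \<in> P"
  obtains m where "m \<in> P" "le m x" "minimal_in P le m"
proof -
  define down where "down y = {z \<in> P. le z y}" for y
  have "x \<in> P \<and> le x x" using assms poset_refl by metis
  then obtain m where m: "m \<in> P" "le m x"
    and least: "\<And>y. y \<in> P \<Longrightarrow> le y x \<Longrightarrow> card (down m) \<le> card (down y)"
    using ex_has_least_nat[of "\<lambda>y. y \<in> P \<and> le y x" x "\<lambda>y. card (down y)"] by blast
  have "minimal_in P le m"
    unfolding minimal_in_def
  proof (intro ballI impI)
    fix y assume y: "y \<in> P" "le y m"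
    show "y = m"
    proof (rule ccontr)
      assume "y \<noteq> m"
      then have "m \<notin> down y" using poset_antisym[OF assms(2) y(1) m(1) y(2)] by (auto simp: down_def)
      moreover have "m \<in> down m" using poset_refl[OF assms(2) m(1)] m(1) by (simp add: down_def)
      moreover have "down y \<subseteq> down m" using poset_trans[OF assms(2) _ y(1) m(1) _ y(2)] by (auto simp: down_def)
      ultimately have "card (down y) < card (down m)"
        using assms(1) by (intro psubset_card_mono) (auto simp: down_def)
      moreover have "le y x" using poset_trans[OF assms(2) y(1) m(1) assms(3) y(2) m(2)] .
      ultimately show False using least[OF y(1)] by simp
    qed
  qed
  then show thesis using that m by blast
qed

lemma poset_iso_C2I:
  assumes "A = {x, y}" "x \<noteq> y" "le x x" "le y y" "le x y" "\<not> le y x"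
  shows "poset_iso A le C2 C2_le"
  unfolding poset_iso_def
proof (intro exI[of _ "\<lambda>z. if z = x then 0 else 1 :: nat"] conjI)
  show "bij_betw (\<lambda>z. if z = x then 0 else 1 :: nat) A C2"
    using assms(1,2) by (auto simp: bij_betw_def inj_on_def C2_def)
  show "\<forall>z\<in>A. \<forall>w\<in>A. le z w \<longleftrightarrow> C2_le (if z = x then 0 else 1) (if w = x then 0 else 1)"
  proof (intro ballI)
    fix z w assume "z \<in> A" "w \<in> A"
    then have "z = x \<or> z = y" "w = x \<or> w = y" using assms(1) by auto
    then show "le z w \<longleftrightarrow> C2_le (if z = x then 0 else 1) (if w = x then 0 else 1)"
      using assms(2-6) by (auto simp: C2_le_def)
  qed
qed

lemma height_eqI:
  assumes "finite X" "C \<subseteq> X" "is_chain le C" "card C = n"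
    and "\<And>D. D \<subseteq> X \<Longrightarrow> is_chain le D \<Longrightarrow> card D \<le> n"
  shows "height le X = n"
  unfolding height_def
proof (rule Max_eqI)
  have "{card D |D. D \<subseteq> X \<and> is_chain le D} \<subseteq> card ` Pow X" by auto
  then show "finite {card D |D. D \<subseteq> X \<and> is_chain le D}"
    using assms(1) finite_subset by blast
qed (use assms in auto)

lemma height_antichain:
  assumes "finite X" "x \<in> X" "\<And>y. y \<in> X \<Longrightarrow> le y y" "\<And>y z. y \<in> X \<Longrightarrow> z \<in> X \<Longrightarrow> le y z \<Longrightarrow> y = z"
  shows "height le X = 1"
proof (rule height_eqI)
  show "is_chain le {x}" using assms(2,3) by (simp add: is_chain_def)
  fix D assume "D \<subseteq> X" "is_chain le D"
  then have "\<forall>y\<in>D. \<forall>z\<in>D. y = z" using assms(4) unfolding is_chain_def by blast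
  then show "card D \<le> 1" using card_le_Suc0_iff_eq[of D] assms(1) \<open>D \<subseteq> X\<close>
    by (metis One_nat_def card.infinite zero_le)
qed (use assms in auto)

lemma moved_subset: "moved P \<sigma> \<subseteq> P"
  by (auto simp: moved_def)

lemma gen_closure_moves:
  assumes "g \<in> gen_closure G" "g x \<noteq> x"
  shows "\<exists>\<sigma>\<in>G. \<sigma> x \<noteq> x"
  using assms by (induction rule: gen_closure.induct) (auto, metis)

lemma n_ord_singleton: assumes "card A = 1" shows "n_ord le A = 0"
proof -
  have "{(a, b). a \<in> A \<and> b \<in> A \<and> less_in le a b} = {}"
    using assms by (auto simp: card_1_singleton_iff less_in_def)
  then show ?thesis unfolding n_ord_def by (metis card.empty)
qed

lemma max_ordered_singleton: "A \<subseteq> X \<Longrightarrow> card A = 1 \<Longrightarrow> max_ordered le X A"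
  by (simp add: max_ordered_def n_ord_singleton)

lemma generator_famD:
  assumes "generator_fam P le Q qle r \<sigma> S"
  shows "aut P le \<sigma>" "2 \<le> r" "moved P \<sigma> = (\<Union>i<r. S i)"
    "\<And>i. i < r \<Longrightarrow> \<sigma> ` S i = S (Suc i mod r)"
    "\<And>i. i < r \<Longrightarrow> poset_iso (S i) le Q qle"
  using assms unfolding generator_fam_def gen_family_def by auto

lemma generator_fam_funpow:
  assumes "generator_fam P le Q qle r \<sigma> S" "i < r"
  shows "S i = (\<sigma> ^^ i) ` S 0"
  using assms(2)
proof (induction i)
  case (Suc i)
  then have "S (Suc i) = \<sigma> ` S i" using generator_famD(4)[OF assms(1), of i] by simp
  then show ?case using Suc by (simp add: image_comp)
qed simp

lemma generator_fam_moved_orbit: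
  assumes "generator_fam P le Q qle r \<sigma> S" "x \<in> moved P \<sigma>"
  obtains i z where "z \<in> S 0" "x = (\<sigma> ^^ i) z"
proof -
  obtain i where "i < r" "x \<in> S i" using assms(2) generator_famD(3)[OF assms(1)] by blast
  then show thesis using that generator_fam_funpow[OF assms(1)] by blast
qed

lemma generator_fam_2D:
  assumes "generator_fam P le Q qle 2 \<sigma> S"
  shows "moved P \<sigma> = S 0 \<union> S 1" "\<sigma> ` S 0 = S 1" "\<sigma> ` S 1 = S 0" "poset_iso (S 0) le Q qle"
proof -
  have "{..<2::nat} = {0, 1}" by auto
  then show "moved P \<sigma> = S 0 \<union> S 1" using generator_famD(3)[OF assms] by simp
  show "\<sigma> ` S 0 = S 1" "\<sigma> ` S 1 = S 0"
    using generator_famD(4)[OF assms, of 0] generator_famD(4)[OF assms, of 1] by simp_all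
  show "poset_iso (S 0) le Q qle" using generator_famD(5)[OF assms, of 0] by simp
qed

lemma gen_family_2_card_moved:
  assumes "gen_family P le 2 \<sigma> T" "finite P" "i < 2"
  shows "card (moved P \<sigma>) \<le> 2 * card (T i)"
proof -
  have "\<sigma> ` T 0 = T 1" "\<sigma> ` T 1 = T 0" and moved: "moved P \<sigma> = T 0 \<union> T 1"
    using assms(1) unfolding gen_family_def by (auto simp: less_2_cases_iff)
  moreover have "finite (T 0)" "finite (T 1)"
    using moved moved_subset assms(2) by (metis finite_Un finite_subset)+
  ultimately have "card (T 0) = card (T 1)"
    by (metis card_image_le le_antisym)
  then show ?thesis
    using moved card_Un_le[of "T 0" "T 1"] assms(3) by (auto simp: less_2_cases_iff)
qed

lemma generator_fam_2I:
  assumes aut: "aut P le \<sigma>" and "finite P"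
    and moved: "moved P \<sigma> = S 0 \<union> S 1" "S 0 \<inter> S 1 = {}"
    and swap: "\<sigma> ` S 0 = S 1" "\<sigma> ` S 1 = S 0"
    and max_ordered: "max_ordered le (moved P \<sigma>) (S 0)" "max_ordered le (moved P \<sigma>) (S 1)"
    and height: "height le (S 0) = height le (moved P \<sigma>)" "height le (S 1) = height le (moved P \<sigma>)"
    and iso: "poset_iso (S 0) le Q qle" "poset_iso (S 1) le Q qle"
  shows "generator_fam P le Q qle 2 \<sigma> S"
proof -
  have "{..<2::nat} = {0, 1}" by auto
  then have family: "gen_family P le 2 \<sigma> S"
    using moved swap max_ordered height by (auto simp: gen_family_def less_2_cases_iff)
  have fin: "finite (S 0)" "finite (S 1)"
    using moved moved_subset \<open>finite P\<close> by (metis finite_Un finite_subset)+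
  have "card (S 1) = card (S 0)"
    using swap(1) card_image aut_bij_betw[OF aut] moved moved_subset
    by (metis Un_upper1 bij_betw_imp_inj_on inj_on_subset)
  then have "card (moved P \<sigma>) = 2 * card (S i)" if "i < 2" for i
    using that moved card_Un_disjoint[OF fin] by (auto simp: less_2_cases_iff)
  then have "card (S i) \<le> card (T i)" if "gen_family P le 2 \<sigma> T" "i < 2" for T i
    using gen_family_2_card_moved[OF that(1) \<open>finite P\<close> that(2)] that(2) by simp
  then show ?thesis
    unfolding generator_fam_def using aut family iso by (auto simp: less_2_cases_iff)
qed

lemma sym_stepD:
  assumes "sym_step P le Q qle r \<sigma> a b"
  shows "is_generator P le Q qle r \<sigma>" "a \<in> moved P \<sigma>" "b \<in> moved P \<sigma>" "\<exists>q. b = (\<sigma> ^^ q) a"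
proof -
  obtain S i j q where "generator_fam P le Q qle r \<sigma> S" "i < r" "j < r" "a \<in> S i" "b \<in> S j"
      "b = (\<sigma> ^^ q) a"
    using assms unfolding sym_step_def by blast
  then show "is_generator P le Q qle r \<sigma>" "a \<in> moved P \<sigma>" "b \<in> moved P \<sigma>" "\<exists>q. b = (\<sigma> ^^ q) a"
    using generator_famD(3)[of P le Q qle r \<sigma> S] by (auto simp: is_generator_def)
qed

lemma sym_step_2_eq: assumes "sym_step P le Q qle 2 \<sigma> a b" shows "b = \<sigma> a"
proof -
  obtain q where "1 \<le> q" "q < 2" "b = (\<sigma> ^^ q) a"
    using assms unfolding sym_step_def by blast
  then show ?thesis by (simp add: less_2_cases_iff)
qed

lemma generator_fam_2_sym_step:
  assumes "generator_fam P le Q qle 2 \<sigma> S" "S 0 \<noteq> S 1" "a \<in> S 0"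
  shows "sym_step P le Q qle 2 \<sigma> a (\<sigma> a)"
proof -
  have "\<sigma> a \<in> S 1" using assms(3) generator_fam_2D(2)[OF assms(1)] by blast
  show ?thesis
    unfolding sym_step_def
    by (rule exI[of _ S], rule exI[of _ 0], rule exI[of _ 1], rule exI[of _ 1])
      (use assms \<open>\<sigma> a \<in> S 1\<close> in simp)
qed

lemma generator_fam_2_adm_gens:
  assumes "generator_fam P le Q qle 2 \<sigma> S" "S 0 \<noteq> S 1"
  shows "\<sigma> \<in> adm_gens P le Q qle 2 (S 0)"
  unfolding adm_gens_def
proof (intro CollectI conjI ballI impI)
  show "is_generator P le Q qle 2 \<sigma>" using assms(1) by (auto simp: is_generator_def)
  fix b assume b: "b \<in> P" "\<not> (\<exists>a\<in>S 0. symrel P le Q qle 2 a b)"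
  show "\<sigma> b = b"
  proof (rule ccontr)
    assume "\<sigma> b \<noteq> b"
    then have "b \<in> S 0 \<or> b \<in> \<sigma> ` S 0" using b(1) generator_fam_2D[OF assms(1)] by (auto simp: moved_def)
    then obtain a where "a \<in> S 0" "a = b \<or> sym1 P le Q qle 2 a b"
      using generator_fam_2_sym_step[OF assms] unfolding sym1_def by blast
    then have "a \<in> S 0" "symrel P le Q qle 2 a b"
      unfolding symrel_def by auto
    then show False using b(2) by blast
  qed
qed

lemma generator_fam_2_sym_set:
  assumes "generator_fam P le Q qle 2 \<sigma> S" "S 0 \<noteq> S 1" "linked P le (S 0)"
  shows "is_sym_set P le Q qle 2 (sym_set P le Q qle 2 (S 0))"
    and "moved P \<sigma> \<subseteq> sym_set P le Q qle 2 (S 0)"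
proof -
  have "S 0 \<subseteq> P" using generator_fam_2D(1)[OF assms(1)] moved_subset[of P \<sigma>] by blast
  then show "is_sym_set P le Q qle 2 (sym_set P le Q qle 2 (S 0))"
    unfolding is_sym_set_def using assms(3) generator_fam_2D(4)[OF assms(1)] by blast
  have "\<sigma> \<circ> id \<in> sym_group P le Q qle 2 (S 0)"
    unfolding sym_group_def by (rule gc_comp[OF generator_fam_2_adm_gens[OF assms(1,2)] gc_id])
  then show "moved P \<sigma> \<subseteq> sym_set P le Q qle 2 (S 0)"
    unfolding sym_set_def moved_def by auto
qed

lemma generator_fam_2_psym1:
  assumes "generator_fam P le Q qle 2 \<sigma> S" "S 0 \<noteq> S 1" "linked P le (S 0)"
    and "\<not> composite P le Q qle 2 (sym_set P le Q qle 2 (S 0))" "a \<in> S 0"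
  shows "psym1 P le Q qle 2 a (\<sigma> a)"
proof -
  have "S 0 \<subseteq> P" using generator_fam_2D(1)[OF assms(1)] moved_subset[of P \<sigma>] by blast
  then show ?thesis
    unfolding psym1_def
    using assms generator_fam_2D(4)[OF assms(1)] generator_fam_2_adm_gens[OF assms(1,2)]
      generator_fam_2_sym_step[OF assms(1,2,5)]
    by blast
qed

lemma psymrel_refl: "psymrel P le Q qle r a a"
  by (simp add: psymrel_def)

lemma psym1_imp_psymrel: "psym1 P le Q qle r a b \<Longrightarrow> psymrel P le Q qle r a b"
  by (auto simp: psymrel_def)

lemma psymrel_sym: "psymrel P le Q qle r a b \<Longrightarrow> psymrel P le Q qle r b a"
  unfolding psymrel_def by (rule symp_rtranclp[THEN sympD]) (auto simp: symp_def)

lemma psymrel_trans: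
  "psymrel P le Q qle r a b \<Longrightarrow> psymrel P le Q qle r b c \<Longrightarrow> psymrel P le Q qle r a c"
  unfolding psymrel_def by (rule rtranclp_trans)

lemma psymrel_imp_symrel: "psymrel P le Q qle r a b \<Longrightarrow> symrel P le Q qle r a b"
  unfolding psymrel_def symrel_def
  by (rule rtranclp_mono[THEN predicate2D, rotated]) (auto simp: psym1_def sym1_def)

lemma psym1_moved:
  assumes "psym1 P le Q qle r a b"
  obtains \<sigma> q where "is_generator P le Q qle r \<sigma>" "a \<in> moved P \<sigma>" "b \<in> moved P \<sigma>"
    "b = (\<sigma> ^^ q) a"
  using assms sym_stepD unfolding psym1_def by metis

lemma psymrel_invariant:
  assumes "psymrel P le Q qle r a b" "a \<in> P"
    and invariant: "\<And>\<sigma> x. aut P le \<sigma> \<Longrightarrow> x \<in> P \<Longrightarrow> \<phi> (\<sigma> x) = \<phi> x"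
  shows "b \<in> P \<and> \<phi> b = \<phi> a"
proof -
  have one_step: "y \<in> P \<and> z \<in> P \<and> \<phi> z = \<phi> y" if step: "psym1 P le Q qle r y z" for y z
  proof -
    obtain \<sigma> q where \<sigma>: "is_generator P le Q qle r \<sigma>" "y \<in> moved P \<sigma>" "z \<in> moved P \<sigma>"
        "z = (\<sigma> ^^ q) y"
      by (rule psym1_moved[OF step])
    then have "aut P le (\<sigma> ^^ q)"
      using aut_funpow generator_famD(1) unfolding is_generator_def by metis
    moreover have "y \<in> P" "z \<in> P" using \<sigma>(2,3) moved_subset[of P \<sigma>] by blast+
    ultimately show ?thesis using invariant \<sigma>(4) by simp
  qed
  show ?thesis
    using assms(1) unfolding psymrel_def
  proof (induction rule: rtranclp_induct)
    case base
    then show ?case using assms(2) by simp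
  next
    case (step y z)
    then show ?case using one_step by auto
  qed
qed

lemma psymrel_first_step:
  assumes "psymrel P le Q qle r a b" "a \<noteq> b"
  obtains c where "psym1 P le Q qle r a c \<or> psym1 P le Q qle r c a"
  using assms unfolding psymrel_def by (metis converse_rtranclpE sup2E conversepD)

lemma poset_iso_singleton: "le x x \<Longrightarrow> qle q q \<Longrightarrow> poset_iso {x} le {q} qle"
  unfolding poset_iso_def by (intro exI[of _ "\<lambda>_. q"]) (simp add: bij_betw_def)

lemma transposition_generator_fam:
  assumes aut: "aut P le (transpose e e')" and "finite P" "e \<in> P" "e' \<in> P" "e \<noteq> e'"
    and refl: "le e e" "le e' e'" and incomparable: "\<not> le e e'" "\<not> le e' e" and "qle q q"
  shows "generator_fam P le {q} qle 2 (transpose e e') (\<lambda>i. if i = 0 then {e} else {e'})"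
proof -
  have moved: "moved P (transpose e e') = {e, e'}"
    using assms(3-5) by (auto simp: moved_def transpose_eq_iff)
  have "height le {e, e'} = 1" "height le {e} = 1" "height le {e'} = 1"
    using refl incomparable by (intro height_antichain; auto)+
  then show ?thesis
    by (intro generator_fam_2I)
      (use assms moved in \<open>auto simp: max_ordered_singleton poset_iso_singleton\<close>)
qed

lemma composite_if_transposition_aut:
  assumes "aut P le (transpose e e')" "finite P" "e \<in> P" "e' \<in> P" "e \<noteq> e'"
    and "le e e" "le e' e'" "\<not> le e e'" "\<not> le e' e"
    and "q \<in> Q" "Q \<noteq> {q}" "qle q q"
  shows "composite P le Q qle 2 P"
proof -
  let ?S = "\<lambda>i::nat. if i = 0 then {e} else {e'}"
  have fam: "generator_fam P le {q} qle 2 (transpose e e') ?S"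
    by (rule transposition_generator_fam) (use assms in auto)
  have "?S 0 \<noteq> ?S 1" "linked P le (?S 0)"
    using assms(5) by (auto simp: linked_def less_in_def)
  note sym_set = generator_fam_2_sym_set[OF fam this]
  have "e \<in> moved P (transpose e e')"
    using assms(3,5) by (simp add: moved_def)
  then have "sym_set P le {q} qle 2 {e} \<noteq> {}"
    using sym_set(2) by auto
  moreover have "sym_set P le {q} qle 2 {e} \<subseteq> P"
    by (auto simp: sym_set_def)
  ultimately show ?thesis
    unfolding composite_def using sym_set(1) assms(10,11)
    by (intro exI[of _ "{q}"] exI[of _ 2] exI[of _ "sym_set P le {q} qle 2 {e}"]) auto
qed

lemma pretract_iso_C2E:
  assumes "poset_iso (pretract_carrier P le Q qle r) (quot_le le) C2 C2_le"
  obtains E F where "P = E \<union> F" "E \<inter> F = {}" "quot_le le E F" "\<not> quot_le le F E"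
    "\<And>x y. x \<in> E \<Longrightarrow> y \<in> E \<Longrightarrow> psymrel P le Q qle r x y"
    "\<And>x y. x \<in> F \<Longrightarrow> y \<in> F \<Longrightarrow> psymrel P le Q qle r x y"
proof -
  define cls where "cls a = {b \<in> P. psymrel P le Q qle r a b}" for a
  have carrier: "pretract_carrier P le Q qle r = cls ` P"
    unfolding pretract_carrier_def cls_def by auto
  obtain h where h: "bij_betw h (cls ` P) C2"
    and h_le: "\<forall>X\<in>cls ` P. \<forall>Y\<in>cls ` P. quot_le le X Y \<longleftrightarrow> C2_le (h X) (h Y)"
    using assms unfolding poset_iso_def carrier by blast
  have "0 \<in> h ` cls ` P" "1 \<in> h ` cls ` P" using bij_betw_imp_surj_on[OF h] by (auto simp: C2_def)
  then obtain a b where ab: "a \<in> P" "h (cls a) = 0" "b \<in> P" "h (cls b) = 1"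
    by (auto elim!: imageE)
  have cls_eq: "cls x = cls y" if "psymrel P le Q qle r x y" for x y
    using psymrel_trans[OF psymrel_sym[OF that]] psymrel_trans[OF that] unfolding cls_def by blast
  have cls_cases: "cls x = cls a \<or> cls x = cls b" if "x \<in> P" for x
  proof -
    have "h (cls x) \<in> C2" using bij_betwE[OF h] that by blast
    then have "h (cls x) = h (cls a) \<or> h (cls x) = h (cls b)" using ab by (auto simp: C2_def)
    then show ?thesis
      using inj_on_eq_iff[OF bij_betw_imp_inj_on[OF h]] ab that by blast
  qed
  have "x \<in> cls x" if "x \<in> P" for x using that psymrel_refl by (simp add: cls_def)
  moreover have "cls x \<subseteq> P" for x by (auto simp: cls_def)
  ultimately have P_eq: "P = cls a \<union> cls b" using cls_cases by blast
  have disjoint: "cls a \<inter> cls b = {}"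
  proof (rule ccontr)
    assume "cls a \<inter> cls b \<noteq> {}"
    then have "psymrel P le Q qle r a b"
      unfolding cls_def using psymrel_trans[of P le Q qle r] psymrel_sym[of P le Q qle r] by blast
    then show False using cls_eq ab by fastforce
  qed
  have quot: "quot_le le (cls a) (cls b)" "\<not> quot_le le (cls b) (cls a)"
    using h_le ab by (auto simp: C2_le_def)
  have connected: "psymrel P le Q qle r x y" if "x \<in> cls z" "y \<in> cls z" for x y z
    using that psymrel_trans[of P le Q qle r] psymrel_sym[of P le Q qle r] unfolding cls_def
    by blast
  show thesis
    by (rule that[OF P_eq disjoint quot]) (use connected in blast)+
qed

lemma minimal_in_psymrel:
  assumes "psymrel P le Q qle r x y" "x \<in> P"
  shows "minimal_in P le y \<longleftrightarrow> minimal_in P le x"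
    and "minimal_in P (\<lambda>x y. le y x) y \<longleftrightarrow> minimal_in P (\<lambda>x y. le y x) x"
proof -
  have "y \<in> P \<and> minimal_in P le y = minimal_in P le x"
    by (rule psymrel_invariant[where \<phi> = "minimal_in P le", OF assms]) (rule minimal_in_aut_iff)
  moreover have "y \<in> P \<and> minimal_in P (\<lambda>x y. le y x) y = minimal_in P (\<lambda>x y. le y x) x"
    by (rule psymrel_invariant[where \<phi> = "minimal_in P (\<lambda>x y. le y x)", OF assms])
      (rule minimal_in_aut_iff[OF aut_converse])
  ultimately show "minimal_in P le y \<longleftrightarrow> minimal_in P le x"
    and "minimal_in P (\<lambda>x y. le y x) y \<longleftrightarrow> minimal_in P (\<lambda>x y. le y x) x"
    by simp_all
qed

section \<open>Posets of height two\<close>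

locale bipartite_poset =
  fixes P :: "'a set" and le :: "'a \<Rightarrow> 'a \<Rightarrow> bool" and E F :: "'a set"
  assumes finite_P: "finite P"
    and P_eq: "P = E \<union> F" and E_F_disjoint: "E \<inter> F = {}"
    and refl: "\<And>x. x \<in> P \<Longrightarrow> le x x"
    and le_E_F: "\<And>x y. x \<in> P \<Longrightarrow> y \<in> P \<Longrightarrow> le x y \<Longrightarrow> x \<noteq> y \<Longrightarrow> x \<in> E \<and> y \<in> F"
    and E_has_upper: "\<And>e. e \<in> E \<Longrightarrow> \<exists>f\<in>F. le e f"
begin

definition nbhd :: "'a \<Rightarrow> 'a set" where
  "nbhd e = {f \<in> F. le e f}"

lemma E_subset: "E \<subseteq> P" and F_subset: "F \<subseteq> P"
  using P_eq by auto

lemma finite_E: "finite E" and finite_F: "finite F"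
  using finite_P P_eq by auto

lemma nbhd_subset: "nbhd e \<subseteq> F"
  by (auto simp: nbhd_def)

lemma finite_nbhd: "finite (nbhd e)"
  using finite_F nbhd_subset by (rule finite_subset[rotated])

lemma E_notin_F: "x \<in> E \<Longrightarrow> x \<notin> F"
  using E_F_disjoint by auto

lemma le_iff: "x \<in> P \<Longrightarrow> y \<in> P \<Longrightarrow> le x y \<longleftrightarrow> x = y \<or> (x \<in> E \<and> y \<in> nbhd x)"
  using le_E_F refl unfolding nbhd_def by blast

lemma less_in_iff: "x \<in> P \<Longrightarrow> y \<in> P \<Longrightarrow> less_in le x y \<longleftrightarrow> x \<in> E \<and> y \<in> nbhd x"
  unfolding less_in_def using le_iff nbhd_subset E_notin_F by blast

lemma E_iff: "x \<in> E \<longleftrightarrow> x \<in> P \<and> (\<exists>y\<in>P. le x y \<and> x \<noteq> y)"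
  using E_has_upper le_E_F E_subset F_subset E_notin_F by blast

lemma nbhd_F:
  assumes "f \<in> F"
  shows "nbhd f = {f}"
proof -
  have "le f f" using refl assms F_subset by blast
  moreover have "x = f" if "x \<in> F" "le f x" for x
    using le_E_F[of f x] that assms F_subset E_notin_F by blast
  ultimately show ?thesis using assms by (auto simp: nbhd_def)
qed

lemma aut_E_iff:
  assumes "aut P le \<sigma>" "x \<in> P"
  shows "\<sigma> x \<in> E \<longleftrightarrow> x \<in> E"
proof -
  have "\<sigma> x \<in> E \<longleftrightarrow> (\<exists>y\<in>\<sigma> ` P. le (\<sigma> x) y \<and> \<sigma> x \<noteq> y)"
    using E_iff aut_in[OF assms] aut_image[OF assms(1)] by simp
  also have "\<dots> \<longleftrightarrow> (\<exists>y\<in>P. le x y \<and> x \<noteq> y)"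
    using assms aut_le_iff aut_eq_iff by fastforce
  finally show ?thesis using E_iff assms(2) by blast
qed

lemma aut_F_iff: assumes "aut P le \<sigma>" "x \<in> P" shows "\<sigma> x \<in> F \<longleftrightarrow> x \<in> F"
  using aut_E_iff[OF assms] aut_in[OF assms] assms(2) P_eq E_F_disjoint by blast

lemma aut_nbhd:
  assumes "aut P le \<sigma>" "e \<in> E"
  shows "nbhd (\<sigma> e) = \<sigma> ` nbhd e"
proof
  have eP: "e \<in> P" using assms(2) E_subset by blast
  show "\<sigma> ` nbhd e \<subseteq> nbhd (\<sigma> e)"
    using aut_F_iff[OF assms(1)] aut_le_iff[OF assms(1) eP] F_subset by (auto simp: nbhd_def)
  show "nbhd (\<sigma> e) \<subseteq> \<sigma> ` nbhd e"
  proof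
    fix f assume f: "f \<in> nbhd (\<sigma> e)"
    then obtain g where g: "g \<in> P" "f = \<sigma> g"
      using aut_image[OF assms(1)] F_subset nbhd_subset by blast
    then have "g \<in> F" "le e g"
      using f aut_F_iff[OF assms(1)] aut_le_iff[OF assms(1) eP] by (auto simp: nbhd_def)
    then show "f \<in> \<sigma> ` nbhd e" using g(2) by (auto simp: nbhd_def)
  qed
qed

lemma aut_image_F:
  assumes "aut P le \<sigma>"
  shows "\<sigma> ` F = F"
proof
  show "\<sigma> ` F \<subseteq> F" using aut_F_iff[OF assms] F_subset by auto
  show "F \<subseteq> \<sigma> ` F"
  proof
    fix f assume "f \<in> F"
    then obtain y where "y \<in> P" "f = \<sigma> y" using aut_image[OF assms] F_subset by blast
    then show "f \<in> \<sigma> ` F" using aut_F_iff[OF assms] \<open>f \<in> F\<close> by blast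
  qed
qed

lemma aut_nbhd_eq_image:
  assumes "aut P le \<sigma>" "\<And>f. f \<in> F \<Longrightarrow> \<sigma> f = g f" "e \<in> E"
  shows "nbhd (\<sigma> e) = g ` nbhd e"
proof -
  have "\<sigma> ` nbhd e = g ` nbhd e" using assms(2) nbhd_subset by (intro image_cong) auto
  then show ?thesis using aut_nbhd[OF assms(1,3)] by simp
qed

lemma autI:
  assumes bij: "bij_betw g P P" and outside: "\<And>x. x \<notin> P \<Longrightarrow> g x = x"
    and E_iff: "\<And>x. x \<in> P \<Longrightarrow> g x \<in> E \<longleftrightarrow> x \<in> E"
    and nbhd_iff: "\<And>e f. e \<in> E \<Longrightarrow> f \<in> F \<Longrightarrow> g f \<in> nbhd (g e) \<longleftrightarrow> f \<in> nbhd e"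
  shows "aut P le g"
  unfolding aut_def
proof (intro conjI ballI allI impI)
  fix x y assume xy: "x \<in> P" "y \<in> P"
  have "g x \<in> P" "g y \<in> P" using bij xy bij_betwE by blast+
  moreover have "g x = g y \<longleftrightarrow> x = y"
    using bij xy by (metis bij_betw_imp_inj_on inj_on_eq_iff)
  moreover have "g y \<in> nbhd (g x) \<longleftrightarrow> y \<in> nbhd x" if "x \<in> E"
    using nbhd_iff[OF that] E_iff[OF xy(2)] xy(2) P_eq nbhd_subset E_notin_F by blast
  ultimately show "le x y \<longleftrightarrow> le (g x) (g y)"
    using le_iff xy E_iff[OF xy(1)] by metis
qed (use bij outside in auto)

lemma chain_card_le_2:
  assumes "C \<subseteq> P" "is_chain le C"
  shows "card C \<le> 2"
proof -
  have same: "x = y" if "x \<in> C" "y \<in> C" "x \<in> E \<and> y \<in> E \<or> x \<in> F \<and> y \<in> F" for x y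
    using that assms le_E_F[of x y] le_E_F[of y x] E_notin_F unfolding is_chain_def by blast
  have "card (C \<inter> E) \<le> 1" "card (C \<inter> F) \<le> 1"
    using same finite_E finite_F by (auto simp: card_le_Suc0_iff_eq)
  moreover have "C = (C \<inter> E) \<union> (C \<inter> F)" using assms(1) P_eq by auto
  ultimately show ?thesis using card_Un_le[of "C \<inter> E" "C \<inter> F"] by simp
qed

lemma height_eq_2:
  assumes "X \<subseteq> P" "x \<in> X" "y \<in> X" "le x y" "x \<noteq> y"
  shows "height le X = 2"
proof (rule height_eqI)
  show "finite X" using assms(1) finite_P finite_subset by blast
  show "is_chain le {x, y}" using assms(1-4) refl unfolding is_chain_def by auto
  show "card {x, y} = 2" using assms(5) by simp
  show "card D \<le> 2" if "D \<subseteq> X" "is_chain le D" for D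
    using chain_card_le_2 that assms(1) by blast
qed (use assms in auto)

lemma n_ord_le_2:
  assumes "B \<subseteq> P" "card B = 3"
  shows "n_ord le B \<le> 2"
proof -
  have fin: "finite B" using assms(2) by (metis card.infinite zero_neq_numeral)
  have "{(a, b). a \<in> B \<and> b \<in> B \<and> less_in le a b} \<subseteq> (B \<inter> E) \<times> (B - E)"
    using assms(1) less_in_iff nbhd_subset E_notin_F by blast
  then have "n_ord le B \<le> card ((B \<inter> E) \<times> (B - E))"
    unfolding n_ord_def using fin by (intro card_mono) auto
  then have "n_ord le B \<le> card (B \<inter> E) * card (B - E)"
    by (simp add: card_cartesian_product)
  moreover have "card (B \<inter> E) + card (B - E) = 3"
    using card_Int_Diff[OF fin] assms(2) by simp
  moreover have "p * q \<le> 2" if "p + q = 3" for p q :: nat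
  proof -
    have "p = 0 \<or> p = 1 \<or> p = 2 \<or> p = 3" using that by arith
    then show ?thesis using that by auto
  qed
  ultimately show ?thesis by (meson order_trans)
qed

lemma linked_subset:
  assumes "A \<subseteq> P"
  shows "linked P le A"
proof -
  have "\<not> (less_in le a c \<and> less_in le c b)" if "a \<in> P" "b \<in> P" "c \<in> P" for a b c
    using less_in_iff[OF that(1,3)] less_in_iff[OF that(3,2)] nbhd_subset E_notin_F by blast
  then show ?thesis using assms by (auto simp: linked_def covers_def)
qed

lemma wedge_isoI:
  assumes "a \<in> E" "b \<in> E" "a \<noteq> b" "c \<in> nbhd a" "c \<in> nbhd b"
  shows "poset_iso {a, b, c} le W W_le"
proof -
  have c: "c \<in> F" "c \<noteq> a" "c \<noteq> b" "c \<notin> E" using assms nbhd_subset E_notin_F by blast+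
  have not_nbhd: "a \<notin> nbhd b" "b \<notin> nbhd a" using assms(1,2) nbhd_subset E_notin_F by blast+
  have abcP: "a \<in> P" "b \<in> P" "c \<in> P" using assms(1,2) c(1) E_subset F_subset by blast+
  define \<beta> where "\<beta> x = (if x = a then 0 else if x = b then 1 else 2::nat)" for x
  have "bij_betw \<beta> {a, b, c} W"
    using assms(3) c unfolding \<beta>_def W_def bij_betw_def inj_on_def by auto
  moreover have "le x y \<longleftrightarrow> W_le (\<beta> x) (\<beta> y)" if "x \<in> {a, b, c}" "y \<in> {a, b, c}" for x y
  proof -
    have "x \<in> P" "y \<in> P" using that abcP by auto
    then show ?thesis
      using le_iff[of x y] that assms c not_nbhd unfolding \<beta>_def W_le_def by auto
  qed
  ultimately show ?thesis unfolding poset_iso_def by blast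
qed

lemma n_ord_wedge:
  assumes "a \<in> E" "b \<in> E" "a \<noteq> b" "c \<in> nbhd a" "c \<in> nbhd b"
  shows "n_ord le {a, b, c} = 2"
proof -
  have c: "c \<in> F" "c \<noteq> a" "c \<noteq> b" "c \<notin> E" using assms nbhd_subset E_notin_F by blast+
  have abcP: "a \<in> P" "b \<in> P" "c \<in> P" using assms(1,2) c(1) E_subset F_subset by blast+
  have "less_in le x y \<longleftrightarrow> (x, y) \<in> {(a, c), (b, c)}" if "x \<in> {a, b, c}" "y \<in> {a, b, c}" for x y
  proof -
    have "x \<in> P" "y \<in> P" using that abcP by auto
    then show ?thesis
      using less_in_iff[of x y] that assms c nbhd_subset E_notin_F by auto
  qed
  then have "{(x, y). x \<in> {a, b, c} \<and> y \<in> {a, b, c} \<and> less_in le x y} = {(a, c), (b, c)}"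
    by auto
  then show ?thesis using assms(3) by (simp add: n_ord_def)
qed

lemma wedge_isoE:
  assumes "poset_iso X le W W_le" "X \<subseteq> P"
  obtains a b c where "X = {a, b, c}" "a \<in> E" "b \<in> E" "a \<noteq> b" "c \<in> nbhd a" "c \<in> nbhd b"
proof -
  obtain \<beta> where \<beta>: "bij_betw \<beta> X W" "\<And>x y. x \<in> X \<Longrightarrow> y \<in> X \<Longrightarrow> le x y \<longleftrightarrow> W_le (\<beta> x) (\<beta> y)"
    using assms(1) unfolding poset_iso_def by blast
  have "0 \<in> \<beta> ` X" "1 \<in> \<beta> ` X" "2 \<in> \<beta> ` X"
    using bij_betw_imp_surj_on[OF \<beta>(1)] by (auto simp: W_def)
  then obtain a b c where abc: "a \<in> X" "\<beta> a = 0" "b \<in> X" "\<beta> b = 1" "c \<in> X" "\<beta> c = 2"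
    by (auto elim!: imageE)
  have "X = {a, b, c}"
  proof
    show "X \<subseteq> {a, b, c}"
    proof
      fix x assume x: "x \<in> X"
      then have "\<beta> x = \<beta> a \<or> \<beta> x = \<beta> b \<or> \<beta> x = \<beta> c"
        using bij_betwE[OF \<beta>(1)] abc unfolding W_def by auto
      then show "x \<in> {a, b, c}"
        using inj_on_eq_iff[OF bij_betw_imp_inj_on[OF \<beta>(1)] x] abc by blast
    qed
  qed (use abc in auto)
  moreover have "le a c" "le b c" "a \<noteq> c" "b \<noteq> c" "a \<noteq> b"
    using \<beta>(2) abc by (auto simp: W_le_def)
  moreover have "a \<in> P" "b \<in> P" "c \<in> P" using abc assms(2) by auto
  ultimately show thesis
    using that le_E_F unfolding nbhd_def by blast
qed

lemma composite_if_twins: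
  assumes "e \<in> E" "e' \<in> E" "e \<noteq> e'" "nbhd e = nbhd e'"
  shows "composite P le W W_le 2 P"
proof (rule composite_if_transposition_aut)
  have eP: "e \<in> P" "e' \<in> P" using assms(1,2) E_subset by blast+
  show "aut P le (transpose e e')"
  proof (rule autI)
    show "bij_betw (transpose e e') P P" using eP by simp
    show "transpose e e' x = x" if "x \<notin> P" for x using that eP by (auto simp: transpose_def)
    show "transpose e e' x \<in> E \<longleftrightarrow> x \<in> E" for x
      using assms(1,2) by (auto simp: transpose_def)
    show "transpose e e' f \<in> nbhd (transpose e e' x) \<longleftrightarrow> f \<in> nbhd x" if "x \<in> E" "f \<in> F" for x f
      using that assms E_notin_F by (auto simp: transpose_def)
  qed
  show "\<not> le e e'" "\<not> le e' e" using assms(1-3) le_E_F eP E_notin_F by blast+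
qed (use assms E_subset refl finite_P in \<open>auto simp: W_def W_le_def\<close>)

lemma generator_fam_moved_orbit_E:
  assumes "generator_fam P le Q qle r \<sigma> S" "y \<in> moved P \<sigma>"
  obtains i z where "z \<in> S 0" "y = (\<sigma> ^^ i) z" "z \<in> E \<longleftrightarrow> y \<in> E"
proof -
  obtain i z where z: "z \<in> S 0" "y = (\<sigma> ^^ i) z"
    by (rule generator_fam_moved_orbit[OF assms])
  have "S 0 \<subseteq> moved P \<sigma>" using generator_famD(2,3)[OF assms(1)] by auto
  then have "z \<in> P" using z(1) moved_subset[of P \<sigma>] by blast
  then have "z \<in> E \<longleftrightarrow> y \<in> E"
    using aut_E_iff[OF aut_funpow[OF generator_famD(1)[OF assms(1)]]] z(2) by blast
  then show thesis using that z by blast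
qed

lemma wedge_generator_fam:
  assumes fam: "generator_fam P le W W_le 2 \<sigma> S"
  obtains a b c where "S 0 = {a, b, c}" "a \<in> E" "b \<in> E" "a \<noteq> b" "c \<in> nbhd a" "c \<in> nbhd b"
    "\<sigma> c \<in> F" "\<sigma> c \<noteq> c" "\<And>f. f \<in> F \<Longrightarrow> \<sigma> f = transpose c (\<sigma> c) f"
proof -
  note S = generator_fam_2D[OF fam]
  have aut: "aut P le \<sigma>" using generator_famD(1)[OF fam] .
  have S0: "S 0 \<subseteq> P" using S(1) moved_subset[of P \<sigma>] by blast
  obtain a b c where abc: "S 0 = {a, b, c}" "a \<in> E" "b \<in> E" "a \<noteq> b" "c \<in> nbhd a" "c \<in> nbhd b"
    using wedge_isoE[OF S(4) S0] by blast
  have c: "c \<in> F" "c \<in> P" using abc(5) nbhd_subset F_subset by blast+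
  have S0_F: "S 0 \<inter> F = {c}" using abc c E_notin_F by auto
  have "\<sigma> a \<in> E" "\<sigma> b \<in> E" using aut_E_iff[OF aut] abc(2,3) E_subset by blast+
  moreover have "S 1 = {\<sigma> a, \<sigma> b, \<sigma> c}" using S(2) abc(1) by simp
  ultimately have S1_F: "S 1 \<inter> F = {\<sigma> c}"
    using c aut_F_iff[OF aut] E_notin_F by auto
  have "c \<in> moved P \<sigma>" using S(1) abc(1) by blast
  then have "\<sigma> c \<noteq> c" by (simp add: moved_def)
  have "\<sigma> c \<in> F" using aut_F_iff[OF aut c(2)] c(1) by blast
  have "\<sigma> (\<sigma> c) \<in> S 0 \<inter> F"
    using S(3) S1_F \<open>\<sigma> c \<in> F\<close> aut_F_iff[OF aut] F_subset by blast
  then have "\<sigma> (\<sigma> c) = c" using S0_F by blast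
  have "\<sigma> f = transpose c (\<sigma> c) f" if "f \<in> F" for f
  proof (cases "f = c \<or> f = \<sigma> c")
    case False
    then have "f \<notin> moved P \<sigma>" using S(1) S0_F S1_F that by blast
    then show ?thesis using False that F_subset by (auto simp: moved_def)
  qed (use \<open>\<sigma> (\<sigma> c) = c\<close> in auto)
  then show thesis using that abc \<open>\<sigma> c \<in> F\<close> \<open>\<sigma> c \<noteq> c\<close> by blast
qed

lemma wedge_generator_separates:
  assumes fam: "generator_fam P le W W_le 2 \<sigma> S" and inj: "inj_on nbhd E"
    and S0: "S 0 = {a, b, c}" "a \<in> E" "b \<in> E" "c \<in> nbhd a" "c \<in> nbhd b"
    and on_F: "\<And>f. f \<in> F \<Longrightarrow> \<sigma> f = transpose c (\<sigma> c) f"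
  shows "{e \<in> E. c \<in> nbhd e \<and> \<sigma> c \<notin> nbhd e} = {a, b}"
proof -
  note S = generator_fam_2D[OF fam]
  have aut: "aut P le \<sigma>" using generator_famD(1)[OF fam] .
  have nbhd_\<sigma>: "nbhd (\<sigma> e) = transpose c (\<sigma> c) ` nbhd e" if "e \<in> E" for e
    using aut_nbhd_eq_image[OF aut on_F that] .
  have fixed_iff: "\<sigma> e = e \<longleftrightarrow> transpose c (\<sigma> c) ` nbhd e = nbhd e" if "e \<in> E" for e
    using nbhd_\<sigma>[OF that] inj_on_eq_iff[OF inj] aut_E_iff[OF aut] that E_subset by force
  have "c \<in> F" using S0(4) nbhd_subset by blast
  have "c \<in> moved P \<sigma>" using S(1) S0(1) by blast
  then have "c \<noteq> \<sigma> c" by (auto simp: moved_def)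
  have "x \<in> {e \<in> E. c \<in> nbhd e \<and> \<sigma> c \<notin> nbhd e}" if "x \<in> {a, b}" for x
  proof -
    have "x \<in> moved P \<sigma>" using that S(1) S0(1) by blast
    then have "transpose c (\<sigma> c) ` nbhd x \<noteq> nbhd x"
      using fixed_iff that S0 by (auto simp: moved_def)
    then show ?thesis
      using that S0 transpose_image_eq_iff[OF \<open>c \<noteq> \<sigma> c\<close>] by auto
  qed
  moreover have "e \<in> {a, b}" if e: "e \<in> E" "c \<in> nbhd e" "\<sigma> c \<notin> nbhd e" for e
  proof -
    have "transpose c (\<sigma> c) ` nbhd e \<noteq> nbhd e"
      using e(2,3) transpose_image_eq_iff[OF \<open>c \<noteq> \<sigma> c\<close>] by blast
    then have "e \<in> S 0 \<union> \<sigma> ` S 0"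
      using fixed_iff[OF e(1)] e(1) S(1,2) E_subset by (auto simp: moved_def)
    moreover have "e \<notin> \<sigma> ` {a, b}"
      using e nbhd_\<sigma> S0 by (auto simp: in_transpose_image_iff)
    moreover have "\<sigma> c \<notin> E" "c \<notin> E"
      using \<open>c \<in> F\<close> aut_F_iff[OF aut] F_subset E_notin_F by blast+
    ultimately show ?thesis using S0(1) e(1) by auto
  qed
  ultimately show ?thesis by blast
qed

lemma card_F_eq_4:
  assumes fam: "generator_fam P le W W_le 2 \<sigma> S" and inj: "inj_on nbhd E"
    and nbhds: "nbhd ` E = {Y. Y \<subseteq> F \<and> card Y = d}"
  shows "card F = 4 \<and> d = 2"
proof -
  obtain a b c where S0: "S 0 = {a, b, c}" "a \<in> E" "b \<in> E" "a \<noteq> b" "c \<in> nbhd a" "c \<in> nbhd b"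
    and c': "\<sigma> c \<in> F" "\<sigma> c \<noteq> c" and on_F: "\<And>f. f \<in> F \<Longrightarrow> \<sigma> f = transpose c (\<sigma> c) f"
    using wedge_generator_fam[OF fam] by blast
  let ?N = "{e \<in> E. c \<in> nbhd e \<and> \<sigma> c \<notin> nbhd e}"
  have "c \<in> F" using S0(5) nbhd_subset by blast
  have "card (nbhd a) = d" using nbhds S0(2) by blast
  moreover have "0 < card (nbhd a)" using S0(5) finite_nbhd card_gt_0_iff by blast
  ultimately have "1 \<le> d" by simp
  have "nbhd ` ?N = {Y \<in> nbhd ` E. c \<in> Y \<and> \<sigma> c \<notin> Y}" by blast
  also have "\<dots> = {Y. Y \<subseteq> F \<and> card Y = d \<and> c \<in> Y \<and> \<sigma> c \<notin> Y}" using nbhds by auto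
  moreover have "inj_on nbhd ?N" using inj by (rule inj_on_subset) auto
  ultimately have "bij_betw nbhd ?N {Y. Y \<subseteq> F \<and> card Y = d \<and> c \<in> Y \<and> \<sigma> c \<notin> Y}"
    unfolding bij_betw_def by simp
  then have "card ?N = (card F - 2) choose (d - 1)"
    using card_subsets_containing_avoiding[OF finite_F \<open>c \<in> F\<close> c'(1)] c'(2) \<open>1 \<le> d\<close>
    by (simp add: bij_betw_same_card)
  moreover have "card ?N = 2"
    using wedge_generator_separates[OF fam inj S0(1,2,3,5,6) on_F] S0(4) by simp
  ultimately have "card F - 2 = 2 \<and> d - 1 = 1" by (intro binomial_eq_2) simp
  then show ?thesis using \<open>1 \<le> d\<close> by auto
qed

lemma psym1_transpose_closed:
  assumes "psym1 P le W W_le 2 u v" "u \<in> F \<or> v \<in> F"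
  shows "u \<in> F \<and> v \<in> F \<and> (\<forall>X\<in>nbhd ` E. transpose u v ` X \<in> nbhd ` E)"
proof -
  obtain \<sigma> where step: "sym_step P le W W_le 2 \<sigma> u v"
    using assms(1) unfolding psym1_def by blast
  obtain S where fam: "generator_fam P le W W_le 2 \<sigma> S"
    using sym_stepD(1)[OF step] unfolding is_generator_def by blast
  have aut: "aut P le \<sigma>" using generator_famD(1)[OF fam] .
  have v: "v = \<sigma> u" using sym_step_2_eq[OF step] .
  have "u \<in> P" "\<sigma> u \<noteq> u" using sym_stepD(2)[OF step] by (auto simp: moved_def)
  then have uv: "u \<in> F" "v \<in> F" using assms(2) v aut_F_iff[OF aut] by blast+
  obtain c where on_F: "\<And>f. f \<in> F \<Longrightarrow> \<sigma> f = transpose c (\<sigma> c) f"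
    by (rule wedge_generator_fam[OF fam]) (rule that)
  have "transpose u v = transpose c (\<sigma> c)"
    using on_F[OF uv(1)] \<open>\<sigma> u \<noteq> u\<close> v by (auto simp: transpose_eq_iff transpose_commute)
  moreover have "transpose c (\<sigma> c) ` nbhd e \<in> nbhd ` E" if "e \<in> E" for e
    using aut_nbhd_eq_image[OF aut on_F that] aut_E_iff[OF aut] that E_subset by (metis image_eqI subsetD)
  ultimately show ?thesis using uv by auto
qed

end

section \<open>A retraction onto \<open>C\<^sub>2\<close> forces a tetrahedron\<close>

lemma bipartite_if_psym_classes:
  assumes "finite P" "poset P le" "P = E \<union> F" "E \<inter> F = {}"
    and "quot_le le E F" "\<not> quot_le le F E"
    and E_psymrel: "\<And>x y. x \<in> E \<Longrightarrow> y \<in> E \<Longrightarrow> psymrel P le Q qle r x y"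
    and F_psymrel: "\<And>x y. x \<in> F \<Longrightarrow> y \<in> F \<Longrightarrow> psymrel P le Q qle r x y"
  shows "bipartite_poset P le E F"
proof -
  let ?ge = "\<lambda>x y. le y x"
  obtain e1 f1 where ef1: "e1 \<in> E" "f1 \<in> F" "le e1 f1" using assms(5) by (auto simp: quot_le_def)
  have P: "e1 \<in> P" "f1 \<in> P" "e1 \<noteq> f1" using ef1 assms(3,4) by auto
  obtain m where m: "m \<in> P" "le m e1" "minimal_in P le m"
    using finite_poset_minimal_below[OF assms(1,2) P(1)] by blast
  then have "m \<in> E" using assms(3,6) ef1(1) by (auto simp: quot_le_def)
  then have E_minimal: "minimal_in P le x" if "x \<in> E" for x
    using minimal_in_psymrel(1)[OF E_psymrel[OF \<open>m \<in> E\<close> that]] m assms(3) by blast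
  obtain m' where m': "m' \<in> P" "le f1 m'" "minimal_in P ?ge m'"
    using finite_poset_minimal_below[OF assms(1) poset_converse[OF assms(2)] P(2)] by blast
  then have "m' \<in> F" using assms(3,6) ef1(2) by (auto simp: quot_le_def)
  then have F_maximal: "minimal_in P ?ge x" if "x \<in> F" for x
    using minimal_in_psymrel(2)[OF F_psymrel[OF \<open>m' \<in> F\<close> that]] m' assms(3) by blast
  have "\<not> minimal_in P ?ge e1" using ef1 P unfolding minimal_in_def by blast
  then have E_not_maximal: "\<not> minimal_in P ?ge x" if "x \<in> E" for x
    using minimal_in_psymrel(2)[OF E_psymrel[OF ef1(1) that]] P(1) by blast
  show ?thesis
  proof
    fix x y assume "x \<in> P" "y \<in> P" "le x y" "x \<noteq> y"
    then show "x \<in> E \<and> y \<in> F"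
      using E_minimal F_maximal assms(3) unfolding minimal_in_def by blast
  next
    fix e assume "e \<in> E"
    then obtain y where "y \<in> P" "le e y" "y \<noteq> e"
      using E_not_maximal unfolding minimal_in_def by blast
    then show "\<exists>f\<in>F. le e f"
      using E_minimal assms(3) \<open>e \<in> E\<close> unfolding minimal_in_def by blast
  next
    show "le x x" if "x \<in> P" for x using poset_refl[OF assms(2) that] .
  qed (use assms in auto)
qed

text \<open>\<open>F\<close> models the four faces of a tetrahedron and \<open>E\<close> its six edges, an edge being
  determined by the two faces containing it.\<close>

locale tetrahedron_poset = bipartite_poset +
  assumes card_F: "card F = 4"
    and nbhd_bij: "bij_betw nbhd E {Y. Y \<subseteq> F \<and> card Y = 2}"

locale two_psym_classes = bipartite_poset +
  assumes E_nonempty: "E \<noteq> {}"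
    and E_psymrel: "\<And>x y. x \<in> E \<Longrightarrow> y \<in> E \<Longrightarrow> psymrel P le W W_le 2 x y"
    and F_psymrel: "\<And>x y. x \<in> F \<Longrightarrow> y \<in> F \<Longrightarrow> psymrel P le W W_le 2 x y"
begin

lemma transpose_closed_nbhds:
  assumes "u \<in> F" "v \<in> F"
  shows "\<forall>X\<in>nbhd ` E. transpose u v ` X \<in> nbhd ` E"
proof -
  have "v \<in> F \<and> (\<forall>X\<in>nbhd ` E. transpose u v ` X \<in> nbhd ` E)"
    using F_psymrel[OF assms] unfolding psymrel_def
  proof (induction rule: rtranclp_induct)
    case (step y z)
    have "y \<in> F" using step.IH by blast
    from step.hyps(2) consider "psym1 P le W W_le 2 y z" | "psym1 P le W W_le 2 z y" by auto
    then have "z \<in> F \<and> (\<forall>X\<in>nbhd ` E. transpose y z ` X \<in> nbhd ` E)"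
    proof cases
      case 1
      then show ?thesis using psym1_transpose_closed[OF 1] \<open>y \<in> F\<close> by blast
    next
      case 2
      then show ?thesis using psym1_transpose_closed[OF 2] \<open>y \<in> F\<close> by (simp add: transpose_commute)
    qed
    then show ?case using transpose_closed_trans[OF conjunct2[OF step.IH]] by simp
  qed (use assms in simp)
  then show ?thesis by blast
qed

lemma card_nbhd_const:
  assumes "e \<in> E" "e' \<in> E"
  shows "card (nbhd e') = card (nbhd e)"
proof -
  define \<phi> where "\<phi> x = (if x \<in> E then card (nbhd x) else 0)" for x
  have "\<phi> (\<sigma> x) = \<phi> x" if "aut P le \<sigma>" "x \<in> P" for \<sigma> x
  proof (cases "x \<in> E")
    case True
    have "inj_on \<sigma> (nbhd x)"
      using aut_bij_betw[OF that(1)] nbhd_subset F_subset by (metis bij_betw_imp_inj_on inj_on_subset)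
    then show ?thesis
      using True aut_E_iff[OF that] aut_nbhd[OF that(1) True] by (simp add: \<phi>_def card_image)
  qed (use aut_E_iff[OF that] in \<open>simp add: \<phi>_def\<close>)
  then have "\<phi> e' = \<phi> e"
    using psymrel_invariant[OF E_psymrel[OF assms]] assms(1) E_subset by blast
  then show ?thesis using assms by (simp add: \<phi>_def)
qed

lemma nbhds_eq_subsets:
  obtains d where "nbhd ` E = {Y. Y \<subseteq> F \<and> card Y = d}"
proof -
  obtain e where e: "e \<in> E" using E_nonempty by blast
  have "nbhd ` E = {Y. Y \<subseteq> F \<and> card Y = card (nbhd e)}"
  proof
    show "nbhd ` E \<subseteq> {Y. Y \<subseteq> F \<and> card Y = card (nbhd e)}"
      using card_nbhd_const[OF e] nbhd_subset by auto
    show "{Y. Y \<subseteq> F \<and> card Y = card (nbhd e)} \<subseteq> nbhd ` E"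
      using transpose_closed_family_contains_equicardinal[of F "nbhd ` E" "nbhd e"]
        transpose_closed_nbhds finite_F e nbhd_subset by blast
  qed
  then show thesis using that by blast
qed

lemma sym_set_eq_P:
  assumes fam: "generator_fam P le W W_le 2 \<sigma> S" and A: "A \<subseteq> P" "poset_iso A le W W_le"
  shows "sym_set P le W W_le 2 A = P"
proof
  obtain a b c where "a \<in> E" "b \<in> E" "a \<noteq> b" "c \<in> nbhd a" "\<sigma> c \<in> F" "\<sigma> c \<noteq> c"
    by (rule wedge_generator_fam[OF fam]) (rule that)
  then have partner: "\<exists>z'. z' \<noteq> z \<and> psymrel P le W W_le 2 z z'" if "z \<in> P" for z
    using that P_eq E_psymrel F_psymrel nbhd_subset by (metis Un_iff subsetD)
  obtain a' c' where "a' \<in> A" "a' \<in> E" "c' \<in> A" "c' \<in> F"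
    using wedge_isoE[OF A(2,1)] nbhd_subset by (metis insertCI subsetD)
  then have related: "\<exists>a\<in>A. symrel P le W W_le 2 a z" if "z \<in> P" for z
    using that P_eq E_psymrel F_psymrel psymrel_imp_symrel by (metis Un_iff)
  show "P \<subseteq> sym_set P le W W_le 2 A"
  proof
    fix z assume "z \<in> P"
    then obtain w where "psym1 P le W W_le 2 z w \<or> psym1 P le W W_le 2 w z"
      using partner psymrel_first_step by metis
    then obtain \<tau> where \<tau>: "is_generator P le W W_le 2 \<tau>" "z \<in> moved P \<tau>"
      using psym1_moved by metis
    then have "\<tau> \<in> adm_gens P le W W_le 2 A" using related by (auto simp: adm_gens_def)
    then have "\<tau> \<circ> id \<in> sym_group P le W W_le 2 A"
      unfolding sym_group_def by (rule gc_comp[OF _ gc_id])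
    then show "z \<in> sym_set P le W W_le 2 A" using \<tau>(2) by (auto simp: sym_set_def moved_def)
  qed
qed (auto simp: sym_set_def)

lemma psym1_exists:
  assumes "\<not> poset_iso P le C2 C2_le"
  obtains x y where "psym1 P le W W_le 2 x y"
proof -
  obtain e f where ef: "e \<in> E" "f \<in> F" "le e f" using E_nonempty E_has_upper by blast
  have "\<exists>x y. x \<noteq> y \<and> psymrel P le W W_le 2 x y"
  proof (rule ccontr)
    assume "\<not> ?thesis"
    then have "E = {e}" "F = {f}" using ef E_psymrel F_psymrel by blast+
    then have "P = {e, f}" using P_eq by auto
    moreover have "e \<noteq> f" "e \<in> P" "f \<in> P" using ef E_notin_F E_subset F_subset by blast+
    moreover have "\<not> le f e" using ef le_E_F[of f e] E_notin_F \<open>f \<in> P\<close> \<open>e \<in> P\<close> by blast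
    ultimately have "poset_iso P le C2 C2_le"
      using ef(3) refl by (intro poset_iso_C2I) simp_all
    then show False using assms by blast
  qed
  then show thesis using that psymrel_first_step by metis
qed

lemma tetrahedron_if_not_C2:
  assumes "\<not> poset_iso P le C2 C2_le"
  shows "tetrahedron_poset P le E F"
proof -
  obtain x y where "psym1 P le W W_le 2 x y" using psym1_exists[OF assms] by blast
  then obtain A \<sigma> where A: "A \<subseteq> P" "poset_iso A le W W_le"
      "\<not> composite P le W W_le 2 (sym_set P le W W_le 2 A)"
    and step: "sym_step P le W W_le 2 \<sigma> x y"
    unfolding psym1_def by blast
  obtain S where fam: "generator_fam P le W W_le 2 \<sigma> S"
    using sym_stepD(1)[OF step] unfolding is_generator_def by blast
  have "\<not> composite P le W W_le 2 P" using A sym_set_eq_P[OF fam A(1,2)] by simp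
  then have inj: "inj_on nbhd E" using composite_if_twins by (meson inj_onI)
  obtain d where nbhds: "nbhd ` E = {Y. Y \<subseteq> F \<and> card Y = d}" by (rule nbhds_eq_subsets)
  then have "card F = 4" "d = 2" using card_F_eq_4[OF fam inj nbhds] by simp_all
  then show ?thesis
    using inj nbhds by unfold_locales (simp_all add: bij_betw_def)
qed

end

section \<open>Prime symmetries of a tetrahedron\<close>

context tetrahedron_poset
begin

lemma card_nbhd: "e \<in> E \<Longrightarrow> card (nbhd e) = 2"
  using nbhd_bij by (auto simp: bij_betw_def)

lemma inj_nbhd: "inj_on nbhd E"
  using nbhd_bij by (simp add: bij_betw_def)

lemma nbhd_surj:
  assumes "Y \<subseteq> F" "card Y = 2"
  obtains e where "e \<in> E" "nbhd e = Y"
proof -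
  have "Y \<in> nbhd ` E" using assms nbhd_bij by (simp add: bij_betw_def)
  then show thesis using that by blast
qed

lemma aut_fixing_F:
  assumes "aut P le \<tau>" "\<And>f. f \<in> F \<Longrightarrow> \<tau> f = f" "x \<in> P"
  shows "\<tau> x = x"
proof (cases "x \<in> E")
  case True
  have "nbhd (\<tau> x) = nbhd x"
    using aut_nbhd[OF assms(1) True] assms(2) nbhd_subset by (force simp: image_iff)
  then show ?thesis
    using inj_on_eq_iff[OF inj_nbhd] aut_E_iff[OF assms(1,3)] True by blast
qed (use assms P_eq in blast)

definition face_swap :: "'a \<Rightarrow> 'a \<Rightarrow> 'a \<Rightarrow> 'a" where
  "face_swap u v x = (if x \<in> F then transpose u v x
     else if x \<in> E then inv_into E nbhd (transpose u v ` nbhd x) else x)"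

lemma face_swap_commute: "face_swap u v = face_swap v u"
  by (simp add: fun_eq_iff face_swap_def transpose_commute)

lemma face_swap_F: "f \<in> F \<Longrightarrow> face_swap u v f = transpose u v f"
  by (simp add: face_swap_def)

lemma face_swap_E:
  assumes "u \<in> F" "v \<in> F" "e \<in> E"
  shows "face_swap u v e \<in> E" "nbhd (face_swap u v e) = transpose u v ` nbhd e"
proof -
  have "transpose u v ` nbhd e \<subseteq> F"
    using transpose_in[OF assms(1,2)] nbhd_subset by blast
  moreover have "card (transpose u v ` nbhd e) = 2"
    using card_nbhd[OF assms(3)] by (simp add: card_image)
  ultimately have "transpose u v ` nbhd e \<in> nbhd ` E"
    by (metis nbhd_surj image_eqI)
  then show "face_swap u v e \<in> E" "nbhd (face_swap u v e) = transpose u v ` nbhd e"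
    using assms(3) E_notin_F by (simp_all add: face_swap_def inv_into_into f_inv_into_f)
qed

lemma face_swap_in_P:
  assumes "u \<in> F" "v \<in> F" "x \<in> P"
  shows "face_swap u v x \<in> P" and "face_swap u v x \<in> E \<longleftrightarrow> x \<in> E"
proof -
  have "face_swap u v x \<in> F" if "x \<in> F"
    using that transpose_in[OF assms(1,2)] by (simp add: face_swap_F)
  then show "face_swap u v x \<in> P" "face_swap u v x \<in> E \<longleftrightarrow> x \<in> E"
    using face_swap_E[OF assms(1,2)] assms(3) P_eq E_notin_F by blast+
qed

lemma face_swap_involutive:
  assumes "u \<in> F" "v \<in> F" "x \<in> P"
  shows "face_swap u v (face_swap u v x) = x"
proof (cases "x \<in> E")
  case True
  have swapped: "face_swap u v x \<in> E" "face_swap u v (face_swap u v x) \<in> E"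
    using face_swap_E(1)[OF assms(1,2)] True by blast+
  have "nbhd (face_swap u v (face_swap u v x)) = transpose u v ` transpose u v ` nbhd x"
    using face_swap_E(2)[OF assms(1,2)] True swapped(1) by simp
  also have "\<dots> = nbhd x" by (simp add: image_comp)
  finally show ?thesis
    using inj_on_eq_iff[OF inj_nbhd swapped(2) True] by blast
next
  case False
  then have "x \<in> F" using assms(3) P_eq by blast
  then show ?thesis using transpose_in[OF assms(1,2)] by (simp add: face_swap_F)
qed

lemma face_swap_aut:
  assumes "u \<in> F" "v \<in> F"
  shows "aut P le (face_swap u v)"
proof (rule autI)
  show "bij_betw (face_swap u v) P P"
    by (rule bij_betw_byWitness[where f' = "face_swap u v"])
      (use face_swap_involutive[OF assms] face_swap_in_P[OF assms] in auto)
  show "face_swap u v x = x" if "x \<notin> P" for x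
    using that P_eq by (simp add: face_swap_def)
  show "face_swap u v x \<in> E \<longleftrightarrow> x \<in> E" if "x \<in> P" for x
    using face_swap_in_P(2)[OF assms that] .
  show "face_swap u v f \<in> nbhd (face_swap u v e) \<longleftrightarrow> f \<in> nbhd e" if "e \<in> E" "f \<in> F" for e f
    using that face_swap_E(2)[OF assms that(1)] by (simp add: face_swap_F inj_image_mem_iff)
qed

definition edges_at :: "'a \<Rightarrow> 'a \<Rightarrow> 'a set" where
  "edges_at u v = {e \<in> E. u \<in> nbhd e \<and> v \<notin> nbhd e}"

lemma edges_at_subset: "edges_at u v \<subseteq> E"
  by (auto simp: edges_at_def)

lemma face_swap_fixes_E_iff:
  assumes "u \<in> F" "v \<in> F" "u \<noteq> v" "e \<in> E"
  shows "face_swap u v e = e \<longleftrightarrow> e \<notin> edges_at u v \<union> edges_at v u"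
proof -
  have "face_swap u v e = e \<longleftrightarrow> transpose u v ` nbhd e = nbhd e"
    using face_swap_E[OF assms(1,2,4)] inj_on_eq_iff[OF inj_nbhd _ assms(4)] by metis
  then show ?thesis
    using transpose_image_eq_iff[OF assms(3)] assms(4) by (auto simp: edges_at_def)
qed

lemma face_swap_edges_at:
  assumes "u \<in> F" "v \<in> F" "e \<in> edges_at u v"
  shows "face_swap u v e \<in> edges_at v u"
  using assms face_swap_E[OF assms(1,2)]
  by (auto simp: edges_at_def in_transpose_image_iff)

lemma moved_face_swap:
  assumes "u \<in> F" "v \<in> F" "u \<noteq> v"
  shows "moved P (face_swap u v) = insert u (edges_at u v) \<union> insert v (edges_at v u)"
proof -
  have F_moved: "face_swap u v x \<noteq> x \<longleftrightarrow> x = u \<or> x = v" if "x \<in> F" for x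
    using that assms(3) by (auto simp: face_swap_F transpose_eq_iff)
  have "x \<in> moved P (face_swap u v) \<longleftrightarrow> x \<in> insert u (edges_at u v) \<union> insert v (edges_at v u)"
    for x
  proof (cases "x \<in> E")
    case True
    then show ?thesis
      using face_swap_fixes_E_iff[OF assms True] E_subset E_notin_F assms(1,2) by (auto simp: moved_def)
  next
    case False
    then show ?thesis
      using F_moved P_eq assms(1,2) edges_at_subset by (auto simp: moved_def)
  qed
  then show ?thesis by blast
qed

lemma face_swap_image:
  assumes "u \<in> F" "v \<in> F"
  shows "face_swap u v ` insert u (edges_at u v) = insert v (edges_at v u)"
proof
  show "face_swap u v ` insert u (edges_at u v) \<subseteq> insert v (edges_at v u)"
    using face_swap_edges_at[OF assms] assms(1) by (auto simp: face_swap_F)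
  show "insert v (edges_at v u) \<subseteq> face_swap u v ` insert u (edges_at u v)"
  proof
    fix y assume y: "y \<in> insert v (edges_at v u)"
    have "y \<in> P" using y edges_at_subset[of v u] E_subset assms(2) F_subset by blast
    then have "y = face_swap u v (face_swap u v y)" using face_swap_involutive[OF assms] by simp
    moreover have "face_swap u v y \<in> insert u (edges_at u v)"
      using y face_swap_edges_at[OF assms(2,1)] assms(2) by (auto simp: face_swap_F face_swap_commute)
    ultimately show "y \<in> face_swap u v ` insert u (edges_at u v)" by blast
  qed
qed

lemma edges_at_wedge:
  assumes "u \<in> F" "v \<in> F" "u \<noteq> v"
  obtains p q where "edges_at u v = {p, q}" "p \<in> E" "q \<in> E" "p \<noteq> q" "u \<in> nbhd p" "u \<in> nbhd q"
proof -
  have "card (F - {u, v}) = 2" using card_F assms by (simp add: card_Diff_subset finite_F)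
  then obtain w z where wz: "F - {u, v} = {w, z}" "w \<noteq> z" by (meson card_2_iff)
  have w: "w \<in> F" "w \<noteq> u" "w \<noteq> v" "z \<in> F" "z \<noteq> u" "z \<noteq> v" using wz by blast+
  have "{u, w} \<subseteq> F" "card {u, w} = 2" using assms w by auto
  then obtain p where p: "p \<in> E" "nbhd p = {u, w}" by (rule nbhd_surj)
  have "{u, z} \<subseteq> F" "card {u, z} = 2" using assms w by auto
  then obtain q where q: "q \<in> E" "nbhd q = {u, z}" by (rule nbhd_surj)
  have "edges_at u v = {p, q}"
  proof
    show "{p, q} \<subseteq> edges_at u v" using p q w assms(3) by (simp add: edges_at_def)
    show "edges_at u v \<subseteq> {p, q}"
    proof
      fix e assume e: "e \<in> edges_at u v"
      then have e: "e \<in> E" "u \<in> nbhd e" "v \<notin> nbhd e" by (auto simp: edges_at_def)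
      then have "card (nbhd e - {u}) = 1" using card_nbhd finite_nbhd by simp
      then obtain t where t: "nbhd e - {u} = {t}" by (rule card_1_singletonE)
      then have "nbhd e = {u, t}" "t \<in> {w, z}"
        using e nbhd_subset wz by blast+
      then have "nbhd e = nbhd p \<or> nbhd e = nbhd q" using p q by auto
      then show "e \<in> {p, q}" using inj_on_eq_iff[OF inj_nbhd] e(1) p(1) q(1) by blast
    qed
  qed
  moreover have "p \<noteq> q" using p q wz by (auto simp: doubleton_eq_iff)
  ultimately show thesis using that p q by simp
qed

lemma moved_edge:
  assumes "aut P le \<tau>" "Y \<subseteq> F" "card Y = 2" "\<tau> ` Y \<noteq> Y"
  obtains e where "e \<in> E" "nbhd e = Y" "e \<in> moved P \<tau>"
proof -
  obtain e where e: "e \<in> E" "nbhd e = Y" using nbhd_surj[OF assms(2,3)] .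
  then have "\<tau> e \<noteq> e" using aut_nbhd[OF assms(1) e(1)] assms(4) by auto
  then show thesis using that e E_subset by (auto simp: moved_def)
qed

text \<open>\<open>T 0\<close> has at most two elements, one of each level, so all moved edges would form a
  single \<open>\<tau>\<close>-orbit.\<close>

lemma small_generator_trivial:
  assumes Q: "Q \<subseteq> W" "Q \<noteq> W" and fam: "generator_fam P le Q W_le r \<tau> T" and x: "x \<in> P"
  shows "\<tau> x = x"
proof (rule ccontr)
  assume "\<tau> x \<noteq> x"
  have aut: "aut P le \<tau>" using generator_famD(1)[OF fam] .
  then obtain f where f: "f \<in> F" "\<tau> f \<noteq> f" using aut_fixing_F \<open>\<tau> x \<noteq> x\<close> x by blast
  have perm: "inj_on \<tau> F" "\<tau> ` F = F"
    using aut_bij_betw[OF aut] F_subset aut_image_F[OF aut] by (auto intro: inj_on_subset bij_betw_imp_inj_on)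
  have "0 < r" using generator_famD(2)[OF fam] by simp
  then have "T 0 \<subseteq> moved P \<tau>" using generator_famD(3)[OF fam] by auto
  then have "T 0 \<subseteq> P" using moved_subset[of P \<tau>] by blast
  obtain \<beta> where "bij_betw \<beta> (T 0) Q"
    using generator_famD(5)[OF fam \<open>0 < r\<close>] unfolding poset_iso_def by blast
  then have "card (T 0) = card Q" by (rule bij_betw_same_card)
  moreover have "card Q < card W" using Q by (intro psubset_card_mono) (auto simp: W_def)
  ultimately have card_T0: "card (T 0) \<le> 2" by (simp add: W_def)
  obtain e\<^sub>0 where "e\<^sub>0 \<in> E" "e\<^sub>0 \<in> moved P \<tau>"
    using perm_4_moved_pair_outside_orbit[OF card_F perm f empty_subsetI] moved_edge[OF aut] by metis
  then obtain z where z: "z \<in> T 0" "z \<in> E"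
    using generator_fam_moved_orbit_E[OF fam] by metis
  have "f \<in> moved P \<tau>" using f F_subset by (auto simp: moved_def)
  then obtain z' where z': "z' \<in> T 0" "z' \<notin> E"
    using generator_fam_moved_orbit_E[OF fam] f(1) E_notin_F by metis
  have T0_E: "y = z" if "y \<in> T 0" "y \<in> E" for y
  proof (rule ccontr)
    assume "y \<noteq> z"
    moreover have "z' \<noteq> y" "z' \<noteq> z" using that z z' by blast+
    ultimately have "{y, z, z'} \<subseteq> T 0" "card {y, z, z'} = 3" using that z z' by auto
    then show False using card_T0 card_mono finite_P \<open>T 0 \<subseteq> P\<close>
      by (metis finite_subset not_less_eq_eq numeral_2_eq_2 numeral_3_eq_3)
  qed
  obtain Y where Y: "Y \<subseteq> F" "card Y = 2" "\<tau> ` Y \<noteq> Y" "\<And>i. (\<tau> ^^ i) ` nbhd z \<noteq> Y"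
    using perm_4_moved_pair_outside_orbit[OF card_F perm f nbhd_subset] by blast
  then obtain e where e: "e \<in> E" "nbhd e = Y" "e \<in> moved P \<tau>" using moved_edge[OF aut] by blast
  then obtain i y where "y \<in> T 0" "e = (\<tau> ^^ i) y" "y \<in> E"
    using generator_fam_moved_orbit_E[OF fam] by metis
  then have "nbhd e = (\<tau> ^^ i) ` nbhd z" using T0_E aut_nbhd[OF aut_funpow[OF aut]] by blast
  then show False using Y(4) e(2) by blast
qed

lemma not_composite: "\<not> composite P le W W_le 2 S"
proof
  assume "composite P le W W_le 2 S"
  then obtain Q r S' where "Q \<subseteq> W" "2 \<le> r" "S' \<noteq> {}" "is_sym_set P le Q W_le r S'"
      "Q \<subset> W \<or> (Q = W \<and> r < 2)"
    unfolding composite_def by blast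
  then have Q: "Q \<subseteq> W" "Q \<noteq> W" by auto
  obtain A where "S' = sym_set P le Q W_le r A"
    using \<open>is_sym_set P le Q W_le r S'\<close> unfolding is_sym_set_def by blast
  then obtain x where "x \<in> sym_set P le Q W_le r A" using \<open>S' \<noteq> {}\<close> by blast
  then obtain g where "x \<in> P" "g \<in> gen_closure (adm_gens P le Q W_le r A)" "g x \<noteq> x"
    unfolding sym_set_def sym_group_def by blast
  then obtain \<sigma> where "\<sigma> \<in> adm_gens P le Q W_le r A" "\<sigma> x \<noteq> x"
    using gen_closure_moves by metis
  then obtain T where "generator_fam P le Q W_le r \<sigma> T" "\<sigma> x \<noteq> x"
    unfolding adm_gens_def is_generator_def by blast
  then show False using small_generator_trivial[OF Q] \<open>x \<in> P\<close> by blast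
qed

lemma face_swap_generator_fam:
  assumes uv: "u \<in> F" "v \<in> F" "u \<noteq> v"
  defines "S \<equiv> \<lambda>i::nat. if i = 0 then insert u (edges_at u v) else insert v (edges_at v u)"
  shows "generator_fam P le W W_le 2 (face_swap u v) S"
proof -
  obtain p q where pq: "edges_at u v = {p, q}" "p \<in> E" "q \<in> E" "p \<noteq> q" "u \<in> nbhd p" "u \<in> nbhd q"
    by (rule edges_at_wedge[OF uv]) (rule that)
  obtain p' q' where pq': "edges_at v u = {p', q'}" "p' \<in> E" "q' \<in> E" "p' \<noteq> q'"
    "v \<in> nbhd p'" "v \<in> nbhd q'"
    by (rule edges_at_wedge[OF uv(2,1) uv(3)[symmetric]]) (rule that)
  have S: "S 0 = {p, q, u}" "S 1 = {p', q', v}" unfolding S_def using pq(1) pq'(1) by auto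
  have moved: "moved P (face_swap u v) = S 0 \<union> S 1"
    unfolding S_def using moved_face_swap[OF uv] by simp
  have "u \<notin> E" "v \<notin> E" using uv E_notin_F by blast+
  then have "u \<noteq> p" "u \<noteq> q" "v \<noteq> p'" "v \<noteq> q'" using pq(2,3) pq'(2,3) by blast+
  then have card_S: "card (S 0) = 3" "card (S 1) = 3" using S pq(4) pq'(4) by simp_all
  have n_ord_S: "n_ord le (S 0) = 2" "n_ord le (S 1) = 2"
    unfolding S using n_ord_wedge pq pq' by simp_all
  have "moved P (face_swap u v) \<subseteq> P" by (rule moved_subset)
  then have "n_ord le B \<le> 2" if "B \<subseteq> moved P (face_swap u v)" "card B = 3" for B
    using that n_ord_le_2 by blast
  then have max_ordered: "max_ordered le (moved P (face_swap u v)) (S 0)"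
    "max_ordered le (moved P (face_swap u v)) (S 1)"
    using moved card_S n_ord_S unfolding max_ordered_def by auto
  have height: "height le (S 0) = 2" "height le (S 1) = 2" "height le (moved P (face_swap u v)) = 2"
  proof -
    have "le p u" "le p' v" using pq(5) pq'(5) by (simp_all add: nbhd_def)
    moreover have "S 0 \<subseteq> P" "S 1 \<subseteq> P" using moved \<open>moved P (face_swap u v) \<subseteq> P\<close> by blast+
    ultimately show "height le (S 0) = 2" "height le (S 1) = 2" "height le (moved P (face_swap u v)) = 2"
      using height_eq_2 S moved \<open>moved P (face_swap u v) \<subseteq> P\<close> \<open>u \<noteq> p\<close> \<open>v \<noteq> p'\<close>
      by (metis Un_iff insertCI)+
  qed
  have "S 0 \<inter> S 1 = {}"
    using S pq(1) pq'(1) \<open>u \<notin> E\<close> \<open>v \<notin> E\<close> uv(3) edges_at_subset by (auto simp: edges_at_def)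
  moreover have "face_swap u v ` S 0 = S 1" "face_swap u v ` S 1 = S 0"
    unfolding S_def using face_swap_image[OF uv(1,2)] face_swap_image[OF uv(2,1)]
    by (simp_all add: face_swap_commute)
  moreover have "poset_iso (S 0) le W W_le" "poset_iso (S 1) le W W_le"
    unfolding S using wedge_isoI pq pq' by simp_all
  ultimately show ?thesis
    using generator_fam_2I[OF face_swap_aut[OF uv(1,2)] finite_P moved] max_ordered height by simp
qed

lemma psym1_face_swap:
  assumes "u \<in> F" "v \<in> F" "u \<noteq> v" "x \<in> insert u (edges_at u v)"
  shows "psym1 P le W W_le 2 x (face_swap u v x)"
proof -
  let ?S = "\<lambda>i::nat. if i = 0 then insert u (edges_at u v) else insert v (edges_at v u)"
  have "?S 0 \<noteq> ?S 1"
    using assms(1,3) edges_at_subset[of v u] E_notin_F by auto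
  moreover have "linked P le (?S 0)"
    using assms(1) edges_at_subset E_subset F_subset by (intro linked_subset) auto
  ultimately show ?thesis
    using generator_fam_2_psym1[OF face_swap_generator_fam[OF assms(1-3)]] not_composite assms(4)
    by simp
qed

lemma F_psymrel: "u \<in> F \<Longrightarrow> v \<in> F \<Longrightarrow> psymrel P le W W_le 2 u v"
  using psym1_face_swap[of u v u] psym1_imp_psymrel psymrel_refl
  by (cases "u = v") (auto simp: face_swap_F)

lemma E_psymrel_adjacent:
  assumes "e \<in> E" "e' \<in> E" "w \<in> nbhd e" "w \<in> nbhd e'"
  shows "psymrel P le W W_le 2 e e'"
proof (cases "e = e'")
  case False
  have "card (nbhd e - {w}) = 1" "card (nbhd e' - {w}) = 1"
    using card_nbhd assms finite_nbhd by simp_all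
  then obtain a b where "nbhd e - {w} = {a}" "nbhd e' - {w} = {b}"
    by (metis card_1_singletonE)
  then have a: "nbhd e = {w, a}" "a \<noteq> w" and b: "nbhd e' = {w, b}" "b \<noteq> w"
    using assms(3,4) by blast+
  have "a \<noteq> b" using a b False inj_on_eq_iff[OF inj_nbhd assms(1,2)] by auto
  have ab: "a \<in> F" "b \<in> F" using a b nbhd_subset by blast+
  have "e \<in> edges_at a b" using a \<open>a \<noteq> b\<close> b(2) assms(1) by (auto simp: edges_at_def)
  then have "psym1 P le W W_le 2 e (face_swap a b e)"
    using psym1_face_swap[OF ab \<open>a \<noteq> b\<close>] by blast
  moreover have "nbhd (face_swap a b e) = nbhd e'"
    using face_swap_E(2)[OF ab assms(1)] a b \<open>a \<noteq> b\<close> by (auto simp: transpose_def)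
  then have "face_swap a b e = e'"
    using inj_on_eq_iff[OF inj_nbhd face_swap_E(1)[OF ab assms(1)] assms(2)] by blast
  ultimately show ?thesis using psym1_imp_psymrel by metis
qed (simp add: psymrel_refl)

lemma E_psymrel:
  assumes "e \<in> E" "e' \<in> E"
  shows "psymrel P le W W_le 2 e e'"
proof -
  obtain w w' where "w \<in> nbhd e" "w' \<in> nbhd e'"
    using card_nbhd assms by (metis card.empty ex_in_conv zero_neq_numeral)
  moreover obtain e'' where "e'' \<in> E" "{w, w'} \<subseteq> nbhd e''"
  proof (cases "w = w'")
    case True
    then show thesis using that assms(1) \<open>w \<in> nbhd e\<close> by simp
  next
    case False
    then have "{w, w'} \<subseteq> F" "card {w, w'} = 2"
      using \<open>w \<in> nbhd e\<close> \<open>w' \<in> nbhd e'\<close> nbhd_subset by auto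
    then obtain e'' where "e'' \<in> E" "nbhd e'' = {w, w'}" by (rule nbhd_surj)
    then show thesis using that by blast
  qed
  ultimately show ?thesis
    using E_psymrel_adjacent assms psymrel_trans by (meson insert_subset)
qed

lemma psym_class:
  assumes "x \<in> P"
  shows "{y \<in> P. psymrel P le W W_le 2 x y} = (if x \<in> E then E else F)"
proof -
  have "y \<in> E \<longleftrightarrow> x \<in> E" if "psymrel P le W W_le 2 x y" for y
    using psymrel_invariant[where \<phi> = "\<lambda>z. z \<in> E", OF that assms] aut_E_iff by blast
  then show ?thesis
    using assms E_psymrel F_psymrel P_eq E_subset F_subset by auto
qed

lemma pretract_iso_C2: "poset_iso (pretract_carrier P le W W_le 2) (quot_le le) C2 C2_le"
proof -
  have "2 \<le> card F" using card_F by simp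
  then obtain Y where "Y \<subseteq> F" "card Y = 2" by (rule obtain_subset_with_card_n)
  then obtain e where e: "e \<in> E" "nbhd e = Y" by (rule nbhd_surj)
  then obtain f where f: "f \<in> F" "le e f"
    using \<open>card Y = 2\<close> nbhd_subset unfolding nbhd_def by (metis card.empty ex_in_conv mem_Collect_eq zero_neq_numeral)
  have "pretract_carrier P le W W_le 2 = (\<lambda>x. {y \<in> P. psymrel P le W W_le 2 x y}) ` P"
    unfolding pretract_carrier_def by auto
  also have "\<dots> = (\<lambda>x. if x \<in> E then E else F) ` P"
    using psym_class by (intro image_cong) simp_all
  also have "\<dots> = {E, F}" using e(1) f(1) E_subset F_subset E_notin_F by auto
  finally have carrier: "pretract_carrier P le W W_le 2 = {E, F}" .
  have "\<not> le f e" if "f \<in> F" "e \<in> E" for f e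
    using that le_E_F[of f e] E_notin_F F_subset E_subset by blast
  then have "\<not> quot_le le F E" by (auto simp: quot_le_def)
  moreover have "le e e" "le f f" using refl e f E_subset F_subset by blast+
  then have "quot_le le E F" "quot_le le E E" "quot_le le F F"
    using e f by (auto simp: quot_le_def)
  moreover have "E \<noteq> F" using e(1) E_notin_F by blast
  ultimately show ?thesis unfolding carrier by (intro poset_iso_C2I) simp_all
qed

lemma not_iso_C2: "\<not> poset_iso P le C2 C2_le"
proof
  assume "poset_iso P le C2 C2_le"
  then have "card P = 2" unfolding poset_iso_def by (auto simp: C2_def dest: bij_betw_same_card)
  moreover have "card F \<le> card P" using card_mono[OF finite_P F_subset] .
  ultimately show False using card_F by simp
qed

lemma le_iff_nbhd_supset:
  assumes "x \<in> P" "y \<in> P"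
  shows "le x y \<longleftrightarrow> nbhd y \<subseteq> nbhd x"
proof (cases "x \<in> E")
  case True
  show ?thesis
  proof (cases "y \<in> E")
    case y: True
    have "nbhd y \<subseteq> nbhd x \<Longrightarrow> nbhd y = nbhd x"
      using card_subset_eq[OF finite_nbhd] card_nbhd True y by metis
    then have "nbhd y \<subseteq> nbhd x \<longleftrightarrow> nbhd y = nbhd x" by blast
    then show ?thesis
      using le_iff[OF assms] inj_on_eq_iff[OF inj_nbhd y True] nbhd_subset y E_notin_F by blast
  next
    case False
    then show ?thesis using le_iff[OF assms] nbhd_F assms(2) P_eq True by auto
  qed
next
  case False
  then have "x \<in> F" using assms(1) P_eq by blast
  moreover have "\<not> nbhd y \<subseteq> {x}" if "y \<in> E"
  proof
    assume "nbhd y \<subseteq> {x}"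
    then have "card (nbhd y) \<le> 1" using card_mono[of "{x}"] by simp
    then show False using card_nbhd[OF that] by simp
  qed
  ultimately show ?thesis
    using le_iff[OF assms] nbhd_F assms(2) P_eq False by auto
qed

end

section \<open>Tetrahedron posets are the copies of \<open>S\<^sub>3|\<^sub>1\<^sub>,\<^sub>2\<close>\<close>

text \<open>Complementation in \<open>{1, 2, 3, 4}\<close> turns \<open>S3_12\<close> into the 1- and 2-subsets ordered by
  reverse inclusion, and \<open>nbhd\<close> is such an anti-isomorphism for a
  tetrahedron poset.\<close>

definition subsets_1_2 :: "'a set \<Rightarrow> 'a set set" where
  "subsets_1_2 X = {Y. Y \<subseteq> X \<and> (card Y = 1 \<or> card Y = 2)}"

lemma (in tetrahedron_poset) bij_betw_nbhd: "bij_betw nbhd P (subsets_1_2 F)"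
proof -
  have "nbhd ` F = {Y. Y \<subseteq> F \<and> card Y = 1}"
    using nbhd_F by (auto simp: card_1_singleton_iff)
  moreover have "nbhd ` E = {Y. Y \<subseteq> F \<and> card Y = 2}"
    using nbhd_bij by (simp add: bij_betw_def)
  moreover have "nbhd ` P = nbhd ` E \<union> nbhd ` F" using P_eq by auto
  ultimately have "nbhd ` P = subsets_1_2 F"
    unfolding subsets_1_2_def by auto
  moreover have "inj_on nbhd P"
  proof (rule inj_onI)
    fix x y assume "x \<in> P" "y \<in> P" "nbhd x = nbhd y"
    then have "le x y" "le y x" using le_iff_nbhd_supset by auto
    then show "x = y"
      using le_E_F[of x y] le_E_F[of y x] \<open>x \<in> P\<close> \<open>y \<in> P\<close> E_F_disjoint by blast
  qed
  ultimately show ?thesis by (simp add: bij_betw_def)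
qed

lemma bij_betw_complement_S3_12:
  "bij_betw (\<lambda>Y. {1, 2, 3, 4} - Y) (subsets_1_2 {1, 2, 3, 4}) S3_12"
  "bij_betw (\<lambda>Y. {1, 2, 3, 4} - Y) S3_12 (subsets_1_2 {1, 2, 3, 4})"
proof -
  have card: "card ({1, 2, 3, 4::nat} - Y) = 4 - card Y" if "Y \<subseteq> {1, 2, 3, 4}" for Y
    using that by (simp add: card_Diff_subset finite_subset)
  show "bij_betw (\<lambda>Y. {1, 2, 3, 4} - Y) (subsets_1_2 {1, 2, 3, 4}) S3_12"
    "bij_betw (\<lambda>Y. {1, 2, 3, 4} - Y) S3_12 (subsets_1_2 {1, 2, 3, 4})"
    by (rule bij_betw_byWitness[where f' = "\<lambda>Y. {1, 2, 3, 4} - Y"];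
        use card in \<open>auto simp: subsets_1_2_def S3_12_def\<close>)+
qed

lemma (in tetrahedron_poset) iso_S3_12: "poset_iso P le S3_12 S3_12_le"
proof -
  have "finite {1, 2, 3, 4::nat}" "card F = card {1, 2, 3, 4::nat}" using card_F by simp_all
  then obtain g where g: "bij_betw g F {1, 2, 3, 4::nat}"
    using finite_same_card_bij[OF finite_F] by blast
  let ?\<phi> = "\<lambda>x. {1, 2, 3, 4} - g ` nbhd x"
  have "bij_betw ?\<phi> P S3_12"
    using bij_betw_trans[OF bij_betw_trans[OF bij_betw_nbhd
          bij_betw_image_subsets_card[OF g, of "\<lambda>n. n = 1 \<or> n = 2", folded subsets_1_2_def]]
        bij_betw_complement_S3_12(1)]
    by (simp add: comp_def)
  moreover have "le x y \<longleftrightarrow> S3_12_le (?\<phi> x) (?\<phi> y)" if "x \<in> P" "y \<in> P" for x y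
  proof -
    have "g ` nbhd x \<subseteq> {1, 2, 3, 4}" "g ` nbhd y \<subseteq> {1, 2, 3, 4}"
      using bij_betw_imp_surj_on[OF g] nbhd_subset by blast+
    moreover have "nbhd y \<subseteq> nbhd x \<longleftrightarrow> g ` nbhd y \<subseteq> g ` nbhd x"
    proof
      assume image: "g ` nbhd y \<subseteq> g ` nbhd x"
      show "nbhd y \<subseteq> nbhd x"
      proof
        fix f assume "f \<in> nbhd y"
        then have "f \<in> F" "g f \<in> g ` nbhd x" using image nbhd_subset by blast+
        then show "f \<in> nbhd x"
          using inj_on_image_mem_iff[OF bij_betw_imp_inj_on[OF g] _ nbhd_subset] by blast
      qed
    qed (rule image_mono)
    moreover have "N - A \<subseteq> N - B \<longleftrightarrow> B \<subseteq> A" if "A \<subseteq> N" "B \<subseteq> N" for A B N :: "nat set"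
      using that by blast
    ultimately show ?thesis
      using le_iff_nbhd_supset[OF that] unfolding S3_12_le_def by simp
  qed
  ultimately show ?thesis unfolding poset_iso_def by blast
qed

lemma bipartite_if_anti_iso:
  assumes \<psi>: "bij_betw \<psi> P (subsets_1_2 X)" and "finite X"
    and le: "\<And>x y. x \<in> P \<Longrightarrow> y \<in> P \<Longrightarrow> le x y \<longleftrightarrow> \<psi> y \<subseteq> \<psi> x"
  shows "bipartite_poset P le {x \<in> P. card (\<psi> x) = 2} {x \<in> P. card (\<psi> x) = 1}"
proof
  have "subsets_1_2 X \<subseteq> Pow X" by (auto simp: subsets_1_2_def)
  then show "finite P" using bij_betw_finite[OF \<psi>] \<open>finite X\<close> finite_subset by blast
  have in_subsets: "\<psi> x \<subseteq> X" "card (\<psi> x) = 1 \<or> card (\<psi> x) = 2" if "x \<in> P" for x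
    using bij_betwE[OF \<psi>] that unfolding subsets_1_2_def by blast+
  show "P = {x \<in> P. card (\<psi> x) = 2} \<union> {x \<in> P. card (\<psi> x) = 1}" using in_subsets(2) by blast
  show "le x x" if "x \<in> P" for x using le[OF that that] by simp
  fix x y assume xy: "x \<in> P" "y \<in> P" "le x y" "x \<noteq> y"
  then have "\<psi> y \<subset> \<psi> x"
    using le bij_betw_imp_inj_on[OF \<psi>] by (auto dest: inj_onD)
  then have "card (\<psi> y) < card (\<psi> x)"
    using in_subsets(1)[OF xy(1)] \<open>finite X\<close> by (meson finite_subset psubset_card_mono)
  then show "x \<in> {x \<in> P. card (\<psi> x) = 2} \<and> y \<in> {x \<in> P. card (\<psi> x) = 1}"
    using in_subsets(2)[OF xy(1)] in_subsets(2)[OF xy(2)] xy(1,2) by auto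
next
  fix e assume "e \<in> {x \<in> P. card (\<psi> x) = 2}"
  then obtain i where e: "e \<in> P" "i \<in> \<psi> e" "\<psi> e \<subseteq> X"
    using bij_betwE[OF \<psi>] unfolding subsets_1_2_def by fastforce
  then have "{i} \<in> subsets_1_2 X" by (auto simp: subsets_1_2_def)
  then obtain f where "f \<in> P" "\<psi> f = {i}"
    using bij_betw_imp_surj_on[OF \<psi>] by (metis imageE)
  then show "\<exists>f\<in>{x \<in> P. card (\<psi> x) = 1}. le e f" using le e by auto
qed auto

lemma (in bipartite_poset) tetrahedron_posetI:
  assumes s: "bij_betw s F X" and "card X = 4"
    and \<psi>: "bij_betw \<psi> E {Y. Y \<subseteq> X \<and> card Y = 2}" and s_nbhd: "\<And>e. e \<in> E \<Longrightarrow> s ` nbhd e = \<psi> e"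
  shows "tetrahedron_poset P le E F"
proof
  show "card F = 4" using bij_betw_same_card[OF s] \<open>card X = 4\<close> by simp
  have "bij_betw ((`) s \<circ> nbhd) E {Y. Y \<subseteq> X \<and> card Y = 2}"
    using \<psi> bij_betw_cong[of E "(`) s \<circ> nbhd" \<psi>] s_nbhd by simp
  moreover have "card (nbhd e) = 2" if "e \<in> E" for e
  proof -
    have "inj_on s (nbhd e)" using bij_betw_imp_inj_on[OF s] nbhd_subset by (rule inj_on_subset)
    then have "card (s ` nbhd e) = card (nbhd e)" by (rule card_image)
    then show ?thesis using s_nbhd[OF that] bij_betwE[OF \<psi>] that by auto
  qed
  then have "nbhd ` E \<subseteq> {Y. Y \<subseteq> F \<and> card Y = 2}" using nbhd_subset by auto
  ultimately show "bij_betw nbhd E {Y. Y \<subseteq> F \<and> card Y = 2}"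
    using bij_betw_comp_iff2[OF bij_betw_image_subsets_card[OF s, of "\<lambda>n. n = 2"]] by blast
qed

lemma tetrahedron_if_anti_iso:
  assumes \<psi>: "bij_betw \<psi> P (subsets_1_2 X)" and "card X = 4"
    and le: "\<And>x y. x \<in> P \<Longrightarrow> y \<in> P \<Longrightarrow> le x y \<longleftrightarrow> \<psi> y \<subseteq> \<psi> x"
  shows "tetrahedron_poset P le {x \<in> P. card (\<psi> x) = 2} {x \<in> P. card (\<psi> x) = 1}"
proof -
  let ?E = "{x \<in> P. card (\<psi> x) = 2}" and ?F = "{x \<in> P. card (\<psi> x) = 1}"
  have "finite X" using \<open>card X = 4\<close> by (metis card.infinite zero_neq_numeral)
  interpret bipartite_poset P le ?E ?F
    by (rule bipartite_if_anti_iso[OF \<psi> \<open>finite X\<close> le])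
  have "{Y \<in> subsets_1_2 X. card Y = k} = {Y. Y \<subseteq> X \<and> card Y = k}" if "k = 1 \<or> k = 2" for k
    using that by (auto simp: subsets_1_2_def)
  then have \<psi>_E: "bij_betw \<psi> ?E {Y. Y \<subseteq> X \<and> card Y = 2}"
    and \<psi>_F: "bij_betw \<psi> ?F {Y. Y \<subseteq> X \<and> card Y = 1}"
    using bij_betw_restrict_pred[OF \<psi>, of "\<lambda>Y. card Y = 2"] bij_betw_restrict_pred[OF \<psi>, of "\<lambda>Y. card Y = 1"]
    by simp_all
  let ?s = "the_elem \<circ> \<psi>"
  have s: "bij_betw ?s ?F X" using bij_betw_trans[OF \<psi>_F bij_betw_the_elem] .
  have "?s ` nbhd e = \<psi> e" if "e \<in> ?E" for e
  proof -
    have "le e f \<longleftrightarrow> ?s f \<in> \<psi> e" if "f \<in> ?F" for f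
    proof -
      have "card (\<psi> f) = 1" using that by simp
      then obtain a where "\<psi> f = {a}" by (rule card_1_singletonE)
      then show ?thesis using le[of e f] \<open>e \<in> ?E\<close> that by simp
    qed
    then have "nbhd e = {f \<in> ?F. ?s f \<in> \<psi> e}"
      unfolding nbhd_def by blast
    then have "?s ` nbhd e = \<psi> e \<inter> ?s ` ?F" by blast
    then show ?thesis
      using bij_betw_imp_surj_on[OF s] bij_betwE[OF \<psi>_E] that by auto
  qed
  then show ?thesis by (rule tetrahedron_posetI[OF s \<open>card X = 4\<close> \<psi>_E])
qed

lemma tetrahedron_if_iso_S3_12:
  assumes "poset_iso P le S3_12 S3_12_le"
  obtains E F where "tetrahedron_poset P le E F"
proof -
  obtain \<phi> where \<phi>: "bij_betw \<phi> P S3_12" "\<forall>x\<in>P. \<forall>y\<in>P. le x y \<longleftrightarrow> \<phi> x \<subseteq> \<phi> y"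
    using assms unfolding poset_iso_def S3_12_le_def by blast
  let ?\<psi> = "\<lambda>x. {1, 2, 3, 4} - \<phi> x"
  have bij: "bij_betw ?\<psi> P (subsets_1_2 {1, 2, 3, 4})"
    using bij_betw_trans[OF \<phi>(1) bij_betw_complement_S3_12(2)] by (simp add: comp_def)
  have sub: "\<phi> x \<subseteq> {1, 2, 3, 4}" if "x \<in> P" for x
    using bij_betwE[OF \<phi>(1)] that unfolding S3_12_def by blast
  have compl: "N - B \<subseteq> N - A \<longleftrightarrow> A \<subseteq> B" if "A \<subseteq> N" "B \<subseteq> N" for A B N :: "nat set"
    using that by blast
  have "le x y \<longleftrightarrow> ?\<psi> y \<subseteq> ?\<psi> x" if "x \<in> P" "y \<in> P" for x y
    using \<phi>(2) that sub compl by simp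
  then have "tetrahedron_poset P le {x \<in> P. card (?\<psi> x) = 2} {x \<in> P. card (?\<psi> x) = 1}"
    by (intro tetrahedron_if_anti_iso[OF bij]) simp_all
  then show thesis by (rule that)
qed

lemma two_psym_classes_if_pretract_iso_C2:
  assumes "finite P" "poset P le"
    and "poset_iso (pretract_carrier P le W W_le 2) (quot_le le) C2 C2_le"
  obtains E F where "two_psym_classes P le E F"
proof -
  obtain E F where classes: "P = E \<union> F" "E \<inter> F = {}" "quot_le le E F" "\<not> quot_le le F E"
    and E: "\<And>x y. x \<in> E \<Longrightarrow> y \<in> E \<Longrightarrow> psymrel P le W W_le 2 x y"
    and F: "\<And>x y. x \<in> F \<Longrightarrow> y \<in> F \<Longrightarrow> psymrel P le W W_le 2 x y"
    by (rule pretract_iso_C2E[OF assms(3)]) (rule that)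
  have "bipartite_poset P le E F"
    by (rule bipartite_if_psym_classes[OF assms(1,2) classes E F])
  moreover have "E \<noteq> {}" using classes(3) by (auto simp: quot_le_def)
  ultimately have "two_psym_classes P le E F"
    using E F by (simp add: two_psym_classes_def two_psym_classes_axioms_def)
  then show thesis by (rule that)
qed

theorem mainTheorem11:
  fixes P :: "'a set" and le :: "'a \<Rightarrow> 'a \<Rightarrow> bool"
  assumes "finite P" and "poset P le"
  shows "(poset_iso (pretract_carrier P le W W_le 2) (quot_le le) C2 C2_le
           \<and> \<not> poset_iso P le C2 C2_le)
         \<longleftrightarrow> poset_iso P le S3_12 S3_12_le"
proof
  assume "poset_iso (pretract_carrier P le W W_le 2) (quot_le le) C2 C2_le
    \<and> \<not> poset_iso P le C2 C2_le"
  then obtain E F where "two_psym_classes P le E F" "\<not> poset_iso P le C2 C2_le"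
    using two_psym_classes_if_pretract_iso_C2[OF assms] by blast
  then have "tetrahedron_poset P le E F" by (intro two_psym_classes.tetrahedron_if_not_C2)
  then show "poset_iso P le S3_12 S3_12_le" by (rule tetrahedron_poset.iso_S3_12)
next
  assume "poset_iso P le S3_12 S3_12_le"
  then obtain E F where "tetrahedron_poset P le E F" by (rule tetrahedron_if_iso_S3_12)
  then show "poset_iso (pretract_carrier P le W W_le 2) (quot_le le) C2 C2_le
    \<and> \<not> poset_iso P le C2 C2_le"
    using tetrahedron_poset.pretract_iso_C2 tetrahedron_poset.not_iso_C2 by blast
qed

end
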